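(* Let $W$ be an $(\ell,\lambda)$-statistic, but suppose the edge indicators $x_e$ are drawn independently with probability $p$ (the $G(n,p)$ model), so the $\chi_e$ are i.i.d. Then \[\operatorname{Wass}\Big(\frac{W_3}{\sigma},\mathcal{N}(0,1)\Big)\lesssim_\lambda\frac{1}{\sqrt n},\] where $\operatorname{Wass}(A,B)=\sup_{\mathrm{Lip}(f)\le1}|\mathbb{E}[f(A)-f(B)]|$ is the Wasserstein distance.
   Context: Fix integers $\ell\ge3$ and $\lambda\in(0,1/2)$. For a graph $H$ without isolated vertices, $\gamma_H(\mathbf{x})=\sum_{E\subseteq\binom{[n]}{2},E\simeq H}\prod_{e\in E}\chi_e$, where $\chi_e=(x_e-p)/\sqrt{p(1-p)}$. An $(\ell,\lambda)$-statistic is $W=\sum_{H\in\mathcal{H}}n^{\ell-v(H)}\Delta_H\gamma_H(\mathbf{x})$ where $\mathcal{H}$ is a set of nonisomorphic graphs with no isolated vertices on at most $\ell$ vertices, $\mathcal{H}'\subseteq\mathcal{H}$ contains a connected graph on $k$ vertices for each $3\le k\le\ell$, $p\in(\lambda,1-\lambda)$, and the $\Delta_H$ are reals with $|\Delta_H|\le1/\lambda$ for $H\in\mathcal{H}$ and $|\Delta_H|\ge\lambda$ for $H\in\mathcal{H}'$. $W_k$ denotes the sum of the terms with $v(H)=k$. $\sigma$ is the standard deviation of $W_3$ in the $G(n,p)$ model. Implicit constants may also depend on $\ell,\mathcal{H},\mathcal{H}'$. *)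

theory Defs
  imports "HOL-Probability.Probability"
begin

text \<open>Graphs are represented by their edge sets: a graph H is a finite set of
  2-element sets of natural numbers; its vertex set is the union of its edges,
  so it has no isolated vertices by construction.\<close>

definition is_graph :: "nat set set \<Rightarrow> bool" where
  "is_graph H \<longleftrightarrow> finite H \<and> (\<forall>e\<in>H. card e = 2)"

definition vtx :: "nat set set \<Rightarrow> nat set" where
  "vtx H = \<Union>H"

definition nv :: "nat set set \<Rightarrow> nat" where
  "nv H = card (vtx H)"

definition graph_iso :: "nat set set \<Rightarrow> nat set set \<Rightarrow> bool" where
  "graph_iso G H \<longleftrightarrow> (\<exists>f. bij_betw f (vtx G) (vtx H) \<and> (\<lambda>e. f ` e) ` G = H)"

definition connected_graph :: "nat set set \<Rightarrow> bool" where
  "connected_graph H \<longleftrightarrow>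
     (\<forall>u\<in>vtx H. \<forall>v\<in>vtx H. (u, v) \<in> {(a, b). {a, b} \<in> H}\<^sup>*)"

definition Kedges :: "nat \<Rightarrow> nat set set" where
  "Kedges n = {e. e \<subseteq> {0..<n} \<and> card e = 2}"

definition chi :: "real \<Rightarrow> (nat set \<Rightarrow> bool) \<Rightarrow> nat set \<Rightarrow> real" where
  "chi p x e = ((if x e then 1 else 0) - p) / sqrt (p * (1 - p))"

definition gammaH :: "nat \<Rightarrow> real \<Rightarrow> nat set set \<Rightarrow> (nat set \<Rightarrow> bool) \<Rightarrow> real" where
  "gammaH n p H x = (\<Sum>E\<in>{E. E \<subseteq> Kedges n \<and> graph_iso E H}. \<Prod>e\<in>E. chi p x e)"

definition Wk :: "nat \<Rightarrow> nat set set set \<Rightarrow> (nat set set \<Rightarrow> real) \<Rightarrow> nat \<Rightarrow> real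
                  \<Rightarrow> nat \<Rightarrow> (nat set \<Rightarrow> bool) \<Rightarrow> real" where
  "Wk l \<H> \<Delta> n p k x =
     (\<Sum>H\<in>{H\<in>\<H>. nv H = k}. real n ^ (l - nv H) * \<Delta> H * gammaH n p H x)"

definition Gnp :: "nat \<Rightarrow> real \<Rightarrow> (nat set \<Rightarrow> bool) pmf" where
  "Gnp n p = Pi_pmf (Kedges n) False (\<lambda>_. bernoulli_pmf p)"

definition std_normal :: "real measure" where
  "std_normal = density lborel std_normal_density"

definition wass_std_normal :: "'a measure \<Rightarrow> ('a \<Rightarrow> real) \<Rightarrow> ereal" where
  "wass_std_normal M X =
     (SUP f \<in> {f :: real \<Rightarrow> real. 1-lipschitz_on UNIV f}.
        ereal \<bar>(\<integral>\<omega>. f (X \<omega>) \<partial>M) - (\<integral>z. f z \<partial>std_normal)\<bar>)"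

end

(* W_3 is a linear combination of the characters chi_set p E = (prod e in E. chi p x e) over the
   edge sets E of three-vertex subgraphs of K_n, with coefficients of order n^(l-3). These
   characters are orthonormal, so the variance is the sum of the squared coefficients; it is of
   order n^(2(l-3)) * n^3 because a three-vertex member of the family has about n^3 copies.
   Two characters are independent unless their edge sets overlap, so Stein's method for sums with
   local dependence applies: with the bounded solution of Stein's equation f' w - w f w =
   h w - E h(Z), the Wasserstein distance is at most 14 * (sum_E E |X_E| V_E^2) +
   2 * E |1 - sum_E X_E V_E|, where X_E are the normalised summands and V_E collects those
   overlapping E. There are O(n^4) overlapping pairs and O(n^5) pairs of pairs with nonzero
   covariance, and the summands are O(n^(-3/2)), so both terms are O(n^(-1/2)). *)

theory Submission
  imports Defs "HOL-Real_Asymp.Real_Asymp"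
begin

section \<open>The standard Gaussian and Stein's equation\<close>

definition gauss :: "real \<Rightarrow> real" where
  "gauss t = exp (- t\<^sup>2 / 2)"

lemma gauss_pos: "0 < gauss t"
  by (simp add: gauss_def)

lemma gauss_minus [simp]: "gauss (- t) = gauss t"
  by (simp add: gauss_def)

lemma gauss_eq_std_normal_density: "gauss t = sqrt (2 * pi) * std_normal_density t"
  by (simp add: gauss_def std_normal_density_def normal_density_def)

lemma continuous_on_gauss [continuous_intros]: "continuous_on A gauss"
  unfolding gauss_def by (auto intro!: continuous_intros)

lemma borel_measurable_gauss [measurable]: "gauss \<in> borel_measurable borel"
  unfolding gauss_def by measurable

lemma gauss_has_real_derivative [derivative_intros]:
  "(gauss has_real_derivative (- t * gauss t)) (at t)"
  unfolding gauss_def by (auto intro!: derivative_eq_intros simp: field_simps)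

lemma integrable_power_gauss: "integrable lborel (\<lambda>t. t ^ k * gauss t)"
  using integrable_mult_right[OF integrable_std_normal_moment[of k], of "sqrt (2 * pi)"]
  by (simp add: gauss_eq_std_normal_density mult_ac)

lemma integrable_abs_power_gauss: "integrable lborel (\<lambda>t. \<bar>t\<bar> ^ k * gauss t)"
  using integrable_mult_right[OF integrable_std_normal_moment_abs[of k], of "sqrt (2 * pi)"]
  by (simp add: gauss_eq_std_normal_density mult_ac)

lemma integrable_gauss: "integrable lborel gauss"
  using integrable_power_gauss[of 0] by simp

lemma integral_gauss: "(\<integral>t. gauss t \<partial>lborel) = sqrt (2 * pi)"
  using has_bochner_integral_integral_eq[OF std_normal_moment_even[of 0]]
  by (simp add: gauss_eq_std_normal_density)

lemma integral_abs_gauss: "(\<integral>t. \<bar>t\<bar> * gauss t \<partial>lborel) = 2"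
proof -
  have "(\<lambda>t. \<bar>t\<bar> * gauss t) = (\<lambda>t. sqrt (2 * pi) * (std_normal_density t * \<bar>t\<bar>))"
    by (simp add: gauss_eq_std_normal_density mult_ac)
  then have "(\<integral>t. \<bar>t\<bar> * gauss t \<partial>lborel) = sqrt (2 * pi) * sqrt (2 / pi)"
    using has_bochner_integral_integral_eq[OF std_normal_moment_abs_odd[of 0]] by simp
  also have "\<dots> = 2"
    by (simp add: real_sqrt_mult[symmetric])
  finally show ?thesis .
qed

lemma integrable_gauss_dominated:
  fixes F :: "real \<Rightarrow> real"
  assumes "F \<in> borel_measurable borel" and "\<And>t. \<bar>F t\<bar> \<le> C * (\<bar>t\<bar> + 1) * gauss t"
  shows "integrable lborel F"
proof (rule Bochner_Integration.integrable_bound)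
  show "integrable lborel (\<lambda>t. C * (\<bar>t\<bar> ^ 1 * gauss t) + C * (t ^ 0 * gauss t))"
    by (intro Bochner_Integration.integrable_add Bochner_Integration.integrable_mult_right
        integrable_power_gauss integrable_abs_power_gauss)
  show "AE t in lborel. norm (F t) \<le> norm (C * (\<bar>t\<bar> ^ 1 * gauss t) + C * (t ^ 0 * gauss t))"
  proof (rule AE_I2)
    fix t
    have "norm (F t) \<le> C * (\<bar>t\<bar> + 1) * gauss t"
      using assms(2)[of t] by simp
    also have "\<dots> \<le> norm (C * (\<bar>t\<bar> ^ 1 * gauss t) + C * (t ^ 0 * gauss t))"
      by (simp add: algebra_simps)
    finally show "norm (F t) \<le> norm (C * (\<bar>t\<bar> ^ 1 * gauss t) + C * (t ^ 0 * gauss t))" .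
  qed
qed (use assms(1) in simp)

lemma integral_std_normal:
  fixes h :: "real \<Rightarrow> real"
  assumes "h \<in> borel_measurable borel"
  shows "(\<integral>z. h z \<partial>std_normal) = (\<integral>t. h t * gauss t \<partial>lborel) / sqrt (2 * pi)"
proof -
  have "(\<integral>z. h z \<partial>std_normal) = (\<integral>t. std_normal_density t * h t \<partial>lborel)"
    unfolding std_normal_def using assms by (subst integral_real_density) auto
  also have "\<dots> = (\<integral>t. h t * gauss t / sqrt (2 * pi) \<partial>lborel)"
    by (simp add: gauss_eq_std_normal_density mult_ac)
  finally show ?thesis
    by simp
qed

lemma integral_Ici_FTC:
  fixes F f :: "real \<Rightarrow> real"
  assumes der: "\<And>t. (F has_real_derivative f t) (at t)"
    and cont: "continuous_on UNIV f"
    and int: "integrable lborel (\<lambda>t. indicator {w..} t * f t)"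
    and lim: "(F \<longlongrightarrow> L) at_top"
  shows "(\<integral>t. indicator {w..} t * f t \<partial>lborel) = L - F w"
proof -
  have eq: "set_lebesgue_integral lborel {w..b} f = F b - F w" if "w \<le> b" for b
  proof -
    have "interval_lebesgue_integral lborel (ereal w) (ereal b) f = F b - F w"
      by (intro interval_integral_FTC_finite continuous_on_subset[OF cont])
        (auto intro: has_field_derivative_at_within
          simp: der has_real_derivative_iff_has_vector_derivative[symmetric])
    then show ?thesis
      using that by (simp add: interval_integral_Icc)
  qed
  have "eventually (\<lambda>b. F b - F w = set_lebesgue_integral lborel {w..b} f) at_top"
    using eventually_ge_at_top[of w] by eventually_elim (simp add: eq)
  then have "((\<lambda>b. set_lebesgue_integral lborel {w..b} f) \<longlongrightarrow> L - F w) at_top"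
    by (rule Lim_transform_eventually[rotated]) (intro tendsto_intros lim)
  moreover have "((\<lambda>b. set_lebesgue_integral lborel {w..b} f)
      \<longlongrightarrow> set_lebesgue_integral lborel {w..} f) at_top"
    by (rule tendsto_set_lebesgue_integral_at_top) (use int in \<open>auto simp: set_integrable_def\<close>)
  ultimately show ?thesis
    using tendsto_unique by (force simp: set_lebesgue_integral_def)
qed

definition tail_moment :: "real \<Rightarrow> nat \<Rightarrow> real" where
  "tail_moment w k = (\<integral>t. indicator {w..} t * ((t - w) ^ k * gauss t) \<partial>lborel) / gauss w"

lemma integrable_Ici_power_gauss:
  "integrable lborel (\<lambda>t. indicator {w..} t * ((t - w) ^ k * gauss t))"
proof -
  have "(t - w) ^ k * gauss t = (\<Sum>i\<le>k. (of_nat (k choose i) * (- w) ^ (k - i)) * (t ^ i * gauss t))"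
    for t
  proof -
    have "(t - w) ^ k = (\<Sum>i\<le>k. of_nat (k choose i) * t ^ i * (- w) ^ (k - i))"
      using binomial_ring[of t "- w" k] by simp
    then show ?thesis
      by (simp add: sum_distrib_left sum_distrib_right mult_ac)
  qed
  then have "integrable lborel (\<lambda>t. (t - w) ^ k * gauss t)"
    by (simp add: integrable_power_gauss)
  then show ?thesis
    using integrable_mult_indicator[of "{w..}" lborel "\<lambda>t. (t - w) ^ k * gauss t"] by simp
qed

lemma tail_moment_nonneg: "0 \<le> tail_moment w k"
  unfolding tail_moment_def
  by (intro divide_nonneg_pos integral_nonneg_AE AE_I2 gauss_pos)
    (auto simp: indicator_def intro!: mult_nonneg_nonneg less_imp_le[OF gauss_pos])

text \<open>Integration by parts against \<open>- (t - w) ^ k * gauss t\<close>, whose derivative is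
  \<open>((t - w) ^ Suc k + w * (t - w) ^ k - k * (t - w) ^ (k - 1)) * gauss t\<close>.\<close>

lemma tail_moment_recurrence:
  "tail_moment w (Suc k) + w * tail_moment w k
     = real k * tail_moment w (k - 1) + (if k = 0 then 1 else 0)"
proof -
  let ?I = "\<lambda>j. \<integral>t. indicator {w..} t * ((t - w) ^ j * gauss t) \<partial>lborel"
  let ?P = "\<lambda>t. (t - w) ^ Suc k + w * (t - w) ^ k - real k * (t - w) ^ (k - 1)"
  have split: "(\<lambda>t. indicator {w..} t * (?P t * gauss t)) =
      (\<lambda>t. indicator {w..} t * ((t - w) ^ Suc k * gauss t)
         + w * (indicator {w..} t * ((t - w) ^ k * gauss t))
         - real k * (indicator {w..} t * ((t - w) ^ (k - 1) * gauss t)))"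
    by (auto simp: fun_eq_iff algebra_simps)
  let ?F = "\<lambda>t. - ((t - w) ^ k * gauss t)"
  have "(\<integral>t. indicator {w..} t * (?P t * gauss t) \<partial>lborel) = 0 - ?F w"
  proof (rule integral_Ici_FTC[where F = ?F])
    show "(?F has_real_derivative ?P t * gauss t) (at t)" for t
    proof -
      have "?P t * gauss t = - (real k * (t - w) ^ (k - 1) * gauss t + (t - w) ^ k * (- t * gauss t))"
        by (simp add: algebra_simps)
      moreover have "(?F has_real_derivative
          - (real k * (t - w) ^ (k - 1) * gauss t + (t - w) ^ k * (- t * gauss t))) (at t)"
        by (auto intro!: derivative_eq_intros)
      ultimately show ?thesis
        by simp
    qed
    show "integrable lborel (\<lambda>t. indicator {w..} t * (?P t * gauss t))"
      unfolding split
      by (intro Bochner_Integration.integrable_diff Bochner_Integration.integrable_add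
          Bochner_Integration.integrable_mult_right integrable_Ici_power_gauss)
    show "(?F \<longlongrightarrow> 0) at_top"
      unfolding gauss_def by real_asymp
  qed (intro continuous_intros)
  moreover have "(\<integral>t. indicator {w..} t * (?P t * gauss t) \<partial>lborel)
      = ?I (Suc k) + w * ?I k - real k * ?I (k - 1)"
    unfolding split
    by (subst Bochner_Integration.integral_diff Bochner_Integration.integral_add
        Bochner_Integration.integral_mult_right;
        (intro Bochner_Integration.integrable_add Bochner_Integration.integrable_mult_right
          integrable_Ici_power_gauss)?)+ simp
  ultimately have "?I (Suc k) + w * ?I k - real k * ?I (k - 1) = (if k = 0 then gauss w else 0)"
    by (cases k) simp_all
  moreover have "tail_moment w (Suc k) + w * tail_moment w k - real k * tail_moment w (k - 1)
      = (?I (Suc k) + w * ?I k - real k * ?I (k - 1)) / gauss w"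
    by (simp add: tail_moment_def diff_divide_distrib add_divide_distrib)
  ultimately show ?thesis
    using gauss_pos[of w] by (auto split: if_splits)
qed

lemma tail_moment_1: "tail_moment w 1 + w * tail_moment w 0 = 1"
  using tail_moment_recurrence[of w 0] by simp

lemma tail_moment_2: "tail_moment w 2 + w * tail_moment w 1 = tail_moment w 0"
  using tail_moment_recurrence[of w 1] by (simp add: numeral_2_eq_2)

lemma tail_moment_3: "tail_moment w 3 + w * tail_moment w 2 = 2 * tail_moment w 1"
  using tail_moment_recurrence[of w 2] by (simp add: numeral_3_eq_3)

lemma tail_moment_0_le:
  assumes "0 \<le> w" "w \<le> 1"
  shows "tail_moment w 0 \<le> 6"
proof -
  have "(\<integral>t. indicator {w..} t * gauss t \<partial>lborel) \<le> (\<integral>t. gauss t \<partial>lborel)"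
    using integrable_mult_indicator[OF _ integrable_gauss, of "{w..}"]
    by (intro integral_mono integrable_gauss)
      (auto simp: indicator_def less_imp_le[OF gauss_pos])
  also have "\<dots> \<le> sqrt (3 ^ 2)"
    unfolding integral_gauss using pi_less_4 by (intro real_sqrt_le_mono) simp
  finally have num: "(\<integral>t. indicator {w..} t * gauss t \<partial>lborel) \<le> 3"
    by simp
  have "exp (1 / 2 :: real) ^ 2 \<le> 2 ^ 2"
    using e_less_272 by (simp add: exp_add[symmetric] power2_eq_square)
  then have "exp (1 / 2 :: real) \<le> 2"
    by (rule power2_le_imp_le) simp
  then have "1 / 2 \<le> exp (- 1 / 2 :: real)"
    by (simp add: exp_minus field_simps)
  also have "\<dots> \<le> gauss w"
    using power_le_one[OF assms, of 2] by (simp add: gauss_def)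
  finally have "1 / 2 \<le> gauss w" .
  then have "(\<integral>t. indicator {w..} t * gauss t \<partial>lborel) / gauss w \<le> 3 / (1 / 2)"
    using num by (intro frac_le) auto
  then show ?thesis
    by (simp add: tail_moment_def)
qed

lemma tail_moment_1_le:
  assumes "0 \<le> w"
  shows "tail_moment w 1 * (1 + w\<^sup>2) \<le> 1"
proof -
  have "w * tail_moment w 1 \<le> tail_moment w 0"
    using tail_moment_2[of w] tail_moment_nonneg[of w 2] by linarith
  then have "w * (w * tail_moment w 1) \<le> w * tail_moment w 0"
    using assms by (rule mult_left_mono)
  then show ?thesis
    using tail_moment_1[of w] by (simp add: algebra_simps power2_eq_square)
qed

lemma tail_moment_2_le:
  assumes "0 \<le> w"
  shows "(w + 1) * tail_moment w 2 \<le> 12"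
proof (cases "w \<le> 1")
  case True
  have "(w + 1) * tail_moment w 2 \<le> 2 * tail_moment w 2"
    using True tail_moment_nonneg[of w 2] by (intro mult_right_mono) auto
  also have "\<dots> \<le> 2 * tail_moment w 0"
    using tail_moment_2[of w] mult_nonneg_nonneg[OF assms tail_moment_nonneg[of w 1]] by simp
  also have "\<dots> \<le> 12"
    using tail_moment_0_le[OF assms True] by simp
  finally show ?thesis .
next
  case False
  have "(w + 1) * tail_moment w 2 \<le> (2 * w) * tail_moment w 2"
    using False tail_moment_nonneg[of w 2] by (intro mult_right_mono) auto
  also have "\<dots> \<le> 4 * tail_moment w 1"
    using tail_moment_3[of w] tail_moment_nonneg[of w 3] by simp
  also have "\<dots> \<le> 4"
    using tail_moment_1_le[OF assms] mult_nonneg_nonneg[OF tail_moment_nonneg[of w 1] zero_le_power2[of w]]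
    by (simp add: algebra_simps)
  finally show ?thesis
    by simp
qed

definition stein_solution :: "(real \<Rightarrow> real) \<Rightarrow> real \<Rightarrow> real" where
  "stein_solution g w = (\<integral>t. indicator {..<w} t * (g t * gauss t) \<partial>lborel) / gauss w"

locale stein_test_function =
  fixes g :: "real \<Rightarrow> real"
  assumes lipschitz: "\<And>s t. \<bar>g s - g t\<bar> \<le> \<bar>s - t\<bar>"
    and growth: "\<And>t. \<bar>g t\<bar> \<le> \<bar>t\<bar> + 1"
    and centered: "(\<integral>t. g t * gauss t \<partial>lborel) = 0"
begin

lemma continuous_on_g: "continuous_on A g"
proof -
  have "1-lipschitz_on A g"
    using lipschitz by (intro lipschitz_onI) (auto simp: dist_real_def)
  then show ?thesis
    by (rule lipschitz_on_continuous_on)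
qed

lemma borel_measurable_g [measurable]: "g \<in> borel_measurable borel"
  by (intro borel_measurable_continuous_onI continuous_on_g)

lemma integrable_indicator_g_gauss:
  assumes "A \<in> sets borel"
  shows "integrable lborel (\<lambda>t. indicator A t * (g t * gauss t))"
proof -
  have "integrable lborel (\<lambda>t. g t * gauss t)"
  proof (rule integrable_gauss_dominated[where C = 1])
    show "\<bar>g t * gauss t\<bar> \<le> 1 * (\<bar>t\<bar> + 1) * gauss t" for t
      using growth[of t] gauss_pos[of t] by (simp add: abs_mult mult_right_mono)
  qed measurable
  then show ?thesis
    using integrable_mult_indicator[of A lborel "\<lambda>t. g t * gauss t"] assms by simp
qed

lemma integral_Iio_g_gauss:
  "(\<integral>t. indicator {..<w} t * (g t * gauss t) \<partial>lborel)
     = - (\<integral>t. indicator {w..} t * (g t * gauss t) \<partial>lborel)"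
proof -
  have "(\<integral>t. indicator {..<w} t * (g t * gauss t) \<partial>lborel)
      + (\<integral>t. indicator {w..} t * (g t * gauss t) \<partial>lborel)
      = (\<integral>t. indicator {..<w} t * (g t * gauss t) + indicator {w..} t * (g t * gauss t) \<partial>lborel)"
    by (rule Bochner_Integration.integral_add[symmetric]) (simp_all add: integrable_indicator_g_gauss)
  also have "\<dots> = (\<integral>t. g t * gauss t \<partial>lborel)"
    by (rule Bochner_Integration.integral_cong) (auto simp: indicator_def)
  finally show ?thesis
    using centered by simp
qed

lemma has_real_derivative_integral_Iio_g_gauss:
  "((\<lambda>w. \<integral>t. indicator {..<w} t * (g t * gauss t) \<partial>lborel) has_real_derivative g w * gauss w) (at w)"
proof -
  define F where "F w = (\<integral>t. indicator {..<w} t * (g t * gauss t) \<partial>lborel)" for w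
  let ?c = "w - 1" and ?b = "w + 1"
  let ?\<psi> = "\<lambda>t. g t * gauss t"
  have "((\<lambda>u. interval_lebesgue_integral lborel (ereal ?c) (ereal u) ?\<psi>) has_vector_derivative ?\<psi> w)
      (at w within {?c..?b})"
    by (rule interval_integral_FTC2) (auto intro: continuous_on_mult continuous_on_g continuous_on_gauss)
  then have d: "((\<lambda>u. F ?c + interval_lebesgue_integral lborel (ereal ?c) (ereal u) ?\<psi>) has_vector_derivative ?\<psi> w)
      (at w within {?c..?b})"
    using has_vector_derivative_add[OF has_vector_derivative_const] by fastforce
  have eq: "F u = F ?c + interval_lebesgue_integral lborel (ereal ?c) (ereal u) ?\<psi>"
    if "u \<in> {?c..?b}" for u
  proof -
    have "{..<u} = {..<?c} \<union> {?c..<u}"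
      using that by auto
    then have "F u = set_lebesgue_integral lborel ({..<?c} \<union> {?c..<u}) ?\<psi>"
      by (simp add: F_def set_lebesgue_integral_def)
    also have "\<dots> = set_lebesgue_integral lborel {..<?c} ?\<psi> + set_lebesgue_integral lborel {?c..<u} ?\<psi>"
      by (rule set_integral_Un) (auto simp: set_integrable_def integrable_indicator_g_gauss)
    finally show ?thesis
      using that by (simp add: F_def set_lebesgue_integral_def interval_integral_Ico)
  qed
  have "(F has_vector_derivative ?\<psi> w) (at w within {?c..?b})"
    by (rule has_vector_derivative_transform[OF _ eq d]) simp
  moreover have "at w within {?c..?b} = at w"
    by (rule at_within_interior) simp
  ultimately show ?thesis
    by (simp add: F_def[abs_def] has_real_derivative_iff_has_vector_derivative)
qed

lemma stein_solution_has_real_derivative: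
  "(stein_solution g has_real_derivative w * stein_solution g w + g w) (at w)"
proof -
  have "(stein_solution g has_real_derivative
      ((g w * gauss w) * gauss w - (\<integral>t. indicator {..<w} t * (g t * gauss t) \<partial>lborel) * (- w * gauss w))
        / (gauss w * gauss w)) (at w)"
    unfolding stein_solution_def[abs_def]
    by (intro DERIV_divide has_real_derivative_integral_Iio_g_gauss gauss_has_real_derivative)
      (simp add: gauss_pos[THEN less_imp_neq, symmetric])
  moreover have "((g w * gauss w) * gauss w
      - (\<integral>t. indicator {..<w} t * (g t * gauss t) \<partial>lborel) * (- w * gauss w)) / (gauss w * gauss w)
      = w * stein_solution g w + g w"
    using gauss_pos[of w] by (simp add: stein_solution_def field_simps)
  ultimately show ?thesis
    by simp
qed

text \<open>The remainder \<open>R\<close> is the tail integral of \<open>(g t - g w) * gauss t\<close> divided by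
  \<open>gauss w\<close>; the Lipschitz bound on \<open>g\<close> makes it at most the first tail moment.\<close>

lemma stein_solution_tail_form:
  obtains R where "stein_solution g w = - (g w * tail_moment w 0 + R)" and "\<bar>R\<bar> \<le> tail_moment w 1"
proof -
  define R where "R = (\<integral>t. indicator {w..} t * ((g t - g w) * gauss t) \<partial>lborel) / gauss w"
  have split: "(\<lambda>t. indicator {w..} t * ((g t - g w) * gauss t)) =
      (\<lambda>t. indicator {w..} t * (g t * gauss t) - g w * (indicator {w..} t * ((t - w) ^ 0 * gauss t)))"
    by (auto simp: fun_eq_iff algebra_simps)
  have int_R: "integrable lborel (\<lambda>t. indicator {w..} t * ((g t - g w) * gauss t))"
    unfolding split
    by (intro Bochner_Integration.integrable_diff Bochner_Integration.integrable_mult_right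
        integrable_indicator_g_gauss integrable_Ici_power_gauss) simp
  have "integrable lborel (\<lambda>t. indicator {w..} t * gauss t)"
    using integrable_Ici_power_gauss[of w 0] by simp
  then have "(\<integral>t. indicator {w..} t * ((g t - g w) * gauss t) \<partial>lborel)
      = (\<integral>t. indicator {w..} t * (g t * gauss t) \<partial>lborel) - g w * tail_moment w 0 * gauss w"
    unfolding split using gauss_pos[of w]
    by (subst Bochner_Integration.integral_diff)
      (auto intro!: integrable_indicator_g_gauss integrable_Ici_power_gauss simp: tail_moment_def)
  then have "stein_solution g w = - (g w * tail_moment w 0 + R)"
    unfolding stein_solution_def integral_Iio_g_gauss R_def
    using gauss_pos[of w] by (simp add: field_simps)
  moreover have "norm (\<integral>t. indicator {w..} t * ((g t - g w) * gauss t) \<partial>lborel)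
      \<le> (\<integral>t. indicator {w..} t * ((t - w) ^ 1 * gauss t) \<partial>lborel)"
  proof (rule Bochner_Integration.integral_norm_bound_integral[OF int_R integrable_Ici_power_gauss])
    show "norm (indicator {w..} t * ((g t - g w) * gauss t)) \<le> indicator {w..} t * ((t - w) ^ 1 * gauss t)"
      for t
      using lipschitz[of t w] gauss_pos[of t]
      by (auto simp: indicator_def abs_mult intro!: mult_right_mono)
  qed
  then have "\<bar>R\<bar> \<le> tail_moment w 1"
    using gauss_pos[of w] by (simp add: R_def tail_moment_def divide_right_mono)
  ultimately show ?thesis
    by (rule that)
qed

lemma stein_solution_bounds_nonneg:
  assumes w: "0 \<le> w"
  shows "\<bar>w * stein_solution g w + g w\<bar> \<le> 2
    \<and> \<bar>stein_solution g w + w * (w * stein_solution g w + g w)\<bar> \<le> 13"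
proof -
  let ?f = "stein_solution g w"
  let ?J = "tail_moment w"
  obtain R where f_eq: "?f = - (g w * ?J 0 + R)" and R_le: "\<bar>R\<bar> \<le> ?J 1"
    by (rule stein_solution_tail_form)
  have J1_eq: "?J 1 = 1 - w * ?J 0" and J2_eq: "?J 2 = ?J 0 - w * ?J 1"
    using tail_moment_1[of w] tail_moment_2[of w] by simp_all
  have "w * ?f + g w = g w * (1 - w * ?J 0) - w * R"
    by (simp add: f_eq algebra_simps)
  then have first: "w * ?f + g w = g w * ?J 1 - w * R"
    by (simp only: J1_eq)
  have "?f + w * (w * ?f + g w) = - g w * (?J 0 - w * (1 - w * ?J 0)) - (1 + w\<^sup>2) * R"
    by (simp add: f_eq algebra_simps power2_eq_square)
  then have second: "?f + w * (w * ?f + g w) = - g w * ?J 2 - (1 + w\<^sup>2) * R"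
    by (simp only: J1_eq J2_eq)
  have g_w: "\<bar>g w\<bar> \<le> w + 1"
    using growth[of w] w by simp
  have J1: "0 \<le> ?J 1" "?J 1 * (1 + w\<^sup>2) \<le> 1"
    using tail_moment_nonneg tail_moment_1_le[OF w] by auto
  have "\<bar>w * ?f + g w\<bar> \<le> (w + 1) * ?J 1 + w * ?J 1"
    unfolding first using g_w R_le w J1(1)
    by (intro order_trans[OF abs_triangle_ineq4] add_mono)
      (auto simp: abs_mult intro!: mult_mono)
  also have "\<dots> \<le> 2 * (1 + w\<^sup>2) * ?J 1"
  proof -
    have "0 \<le> (w - 1)\<^sup>2 + w\<^sup>2"
      by simp
    then have "2 * w + 1 \<le> 2 * (1 + w\<^sup>2)"
      by (simp add: power2_diff algebra_simps)
    then have "(2 * w + 1) * ?J 1 \<le> 2 * (1 + w\<^sup>2) * ?J 1"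
      using J1(1) by (rule mult_right_mono)
    then show ?thesis
      by (simp add: algebra_simps)
  qed
  also have "\<dots> \<le> 2"
    using J1(2) by (simp add: algebra_simps)
  finally have "\<bar>w * ?f + g w\<bar> \<le> 2" .
  moreover have "\<bar>?f + w * (w * ?f + g w)\<bar> \<le> (w + 1) * ?J 2 + (1 + w\<^sup>2) * ?J 1"
    unfolding second using g_w R_le tail_moment_nonneg[of w 2]
    by (intro order_trans[OF abs_triangle_ineq4] add_mono)
      (auto simp: abs_mult intro!: mult_mono)
  moreover have "(w + 1) * ?J 2 + (1 + w\<^sup>2) * ?J 1 \<le> 12 + 1"
    using tail_moment_2_le[OF w] J1(2) by (simp add: mult.commute)
  ultimately show ?thesis
    by simp
qed

lemma reflect: "stein_test_function (\<lambda>s. - g (- s))"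
proof
  show "\<bar>- g (- s) - - g (- t)\<bar> \<le> \<bar>s - t\<bar>" for s t
    using lipschitz[of "- t" "- s"] by simp
  show "\<bar>- g (- t)\<bar> \<le> \<bar>t\<bar> + 1" for t
    using growth[of "- t"] by simp
  have "(\<integral>t. g t * gauss t \<partial>lborel) = (\<integral>s. g (- s) * gauss s \<partial>lborel)"
    using lborel_integral_real_affine[of "- 1" "\<lambda>t. g t * gauss t" 0] by (simp add: gauss_def)
  then show "(\<integral>s. - g (- s) * gauss s \<partial>lborel) = 0"
    using centered by simp
qed

lemma stein_solution_reflect: "stein_solution (\<lambda>s. - g (- s)) v = stein_solution g (- v)"
proof -
  have "(\<integral>s. indicator {..<v} s * (- g (- s) * gauss s) \<partial>lborel)
      = (\<integral>t. indicator {..<v} (- t) * (- g t * gauss t) \<partial>lborel)"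
    using lborel_integral_real_affine[of "- 1" "\<lambda>s. indicator {..<v} s * (- g (- s) * gauss s)" 0]
    by (simp add: gauss_def)
  also have "\<dots> = (\<integral>t. - (indicator {- v<..} t * (g t * gauss t)) \<partial>lborel)"
    by (rule Bochner_Integration.integral_cong) (auto simp: indicator_def)
  also have "\<dots> = - (\<integral>t. indicator {- v..} t * (g t * gauss t) \<partial>lborel)"
    by (subst integral_minus, rule arg_cong[where f = uminus], rule integral_cong_AE)
      (auto simp: indicator_def intro: AE_mp[OF AE_lborel_singleton[of "- v"]])
  finally show ?thesis
    unfolding stein_solution_def integral_Iio_g_gauss gauss_minus by simp
qed

lemma stein_solution_bounds:
  "\<bar>w * stein_solution g w + g w\<bar> \<le> 2
    \<and> \<bar>stein_solution g w + w * (w * stein_solution g w + g w)\<bar> \<le> 13"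
proof (cases "0 \<le> w")
  case True
  then show ?thesis
    by (rule stein_solution_bounds_nonneg)
next
  case False
  interpret reflected: stein_test_function "\<lambda>s. - g (- s)"
    by (rule reflect)
  have "\<bar>- w * stein_solution g w - g w\<bar> \<le> 2
      \<and> \<bar>stein_solution g w + - w * (- w * stein_solution g w - g w)\<bar> \<le> 13"
    using reflected.stein_solution_bounds_nonneg[of "- w"] False by (simp add: stein_solution_reflect)
  moreover have "- w * stein_solution g w - g w = - (w * stein_solution g w + g w)"
    and "- w * (- w * stein_solution g w - g w) = w * (w * stein_solution g w + g w)"
    by (simp_all add: algebra_simps)
  ultimately show ?thesis
    by (simp only: abs_minus_cancel)
qed

lemma stein_solution_derivative_lipschitz:
  "\<bar>(x * stein_solution g x + g x) - (y * stein_solution g y + g y)\<bar> \<le> 14 * \<bar>x - y\<bar>"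
proof -
  have "\<bar>x * stein_solution g x - y * stein_solution g y\<bar> \<le> 13 * \<bar>x - y\<bar>"
  proof (rule field_differentiable_bound[OF convex_UNIV, where f = "\<lambda>w. w * stein_solution g w",
        simplified real_norm_def, OF _ _ UNIV_I UNIV_I])
    show "((\<lambda>w. w * stein_solution g w) has_field_derivative
        stein_solution g w + w * (w * stein_solution g w + g w)) (at w within UNIV)" for w
      using DERIV_mult[OF DERIV_ident stein_solution_has_real_derivative[of w]]
      by (simp add: algebra_simps)
    show "\<bar>stein_solution g w + w * (w * stein_solution g w + g w)\<bar> \<le> 13" for w
      using stein_solution_bounds[of w] by simp
  qed
  then have "\<bar>x * stein_solution g x - y * stein_solution g y\<bar> + \<bar>g x - g y\<bar> \<le> 14 * \<bar>x - y\<bar>"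
    using lipschitz[of x y] by simp
  moreover have "\<bar>(x * stein_solution g x + g x) - (y * stein_solution g y + g y)\<bar>
      \<le> \<bar>x * stein_solution g x - y * stein_solution g y\<bar> + \<bar>g x - g y\<bar>"
    using abs_triangle_ineq[of "x * stein_solution g x - y * stein_solution g y" "g x - g y"]
    by (simp add: algebra_simps)
  ultimately show ?thesis
    by simp
qed

end

lemma abs_std_normal_mean_diff_le:
  fixes h :: "real \<Rightarrow> real"
  assumes "1-lipschitz_on UNIV h"
  shows "\<bar>h 0 - (\<integral>z. h z \<partial>std_normal)\<bar> \<le> 1"
proof -
  have h_lip: "\<bar>h s - h t\<bar> \<le> \<bar>s - t\<bar>" for s t
    using lipschitz_onD[OF assms, of s t] by (simp add: dist_real_def)
  have [measurable]: "h \<in> borel_measurable borel"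
    by (intro borel_measurable_continuous_onI lipschitz_on_continuous_on[OF assms])
  have int: "integrable lborel (\<lambda>t. (h t - h 0) * gauss t)"
  proof (rule integrable_gauss_dominated[where C = 1])
    show "\<bar>(h t - h 0) * gauss t\<bar> \<le> 1 * (\<bar>t\<bar> + 1) * gauss t" for t
      using h_lip[of t 0] gauss_pos[of t] by (simp add: abs_mult mult_right_mono)
  qed measurable
  have "(\<integral>z. h z \<partial>std_normal) - h 0 = (\<integral>t. (h t - h 0) * gauss t \<partial>lborel) / sqrt (2 * pi)"
  proof -
    have "(\<integral>t. (h t - h 0) * gauss t \<partial>lborel) + h 0 * sqrt (2 * pi) = (\<integral>t. h t * gauss t \<partial>lborel)"
      using Bochner_Integration.integral_add[OF int Bochner_Integration.integrable_mult_right[OF integrable_gauss, of "h 0"]]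
      by (simp add: integral_gauss algebra_simps)
    then show ?thesis
      by (simp add: integral_std_normal field_simps)
  qed
  moreover have "norm (\<integral>t. (h t - h 0) * gauss t \<partial>lborel) \<le> (\<integral>t. \<bar>t\<bar> ^ 1 * gauss t \<partial>lborel)"
  proof (rule Bochner_Integration.integral_norm_bound_integral[OF int integrable_abs_power_gauss])
    show "norm ((h t - h 0) * gauss t) \<le> \<bar>t\<bar> ^ 1 * gauss t" for t
      using h_lip[of t 0] gauss_pos[of t] by (simp add: abs_mult mult_right_mono)
  qed
  moreover have "2 \<le> sqrt (2 * pi)"
    using real_sqrt_le_mono[of "2 ^ 2" "2 * pi"] pi_gt3 by simp
  ultimately have "\<bar>(\<integral>z. h z \<partial>std_normal) - h 0\<bar> \<le> 2 / sqrt (2 * pi)"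
    by (simp add: integral_abs_gauss divide_right_mono)
  also have "\<dots> \<le> 1"
    using \<open>2 \<le> sqrt (2 * pi)\<close> by simp
  finally show ?thesis
    by (simp add: abs_minus_commute)
qed

lemma stein_test_function_centered:
  fixes h :: "real \<Rightarrow> real"
  assumes "1-lipschitz_on UNIV h"
  shows "stein_test_function (\<lambda>t. h t - (\<integral>z. h z \<partial>std_normal))"
proof
  have h_lip: "\<bar>h s - h t\<bar> \<le> \<bar>s - t\<bar>" for s t
    using lipschitz_onD[OF assms, of s t] by (simp add: dist_real_def)
  then show "\<bar>(h s - (\<integral>z. h z \<partial>std_normal)) - (h t - (\<integral>z. h z \<partial>std_normal))\<bar> \<le> \<bar>s - t\<bar>" for s t
    by simp
  show "\<bar>h t - (\<integral>z. h z \<partial>std_normal)\<bar> \<le> \<bar>t\<bar> + 1" for t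
    using h_lip[of t 0] abs_std_normal_mean_diff_le[OF assms] by linarith
  have [measurable]: "h \<in> borel_measurable borel"
    by (intro borel_measurable_continuous_onI lipschitz_on_continuous_on[OF assms])
  have "integrable lborel (\<lambda>t. h t * gauss t)"
  proof (rule integrable_gauss_dominated[where C = "\<bar>h 0\<bar> + 1"])
    show "\<bar>h t * gauss t\<bar> \<le> (\<bar>h 0\<bar> + 1) * (\<bar>t\<bar> + 1) * gauss t" for t
    proof -
      have "\<bar>h t\<bar> \<le> \<bar>h 0\<bar> * \<bar>t\<bar> + \<bar>h 0\<bar> + \<bar>t\<bar> + 1"
        using h_lip[of t 0] abs_triangle_ineq2[of "h t" "h 0"]
          mult_nonneg_nonneg[OF abs_ge_zero[of "h 0"] abs_ge_zero[of t]]
        by linarith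
      then have "\<bar>h t\<bar> \<le> (\<bar>h 0\<bar> + 1) * (\<bar>t\<bar> + 1)"
        by (simp add: algebra_simps)
      then show ?thesis
        using gauss_pos[of t] by (simp add: abs_mult mult_right_mono)
    qed
  qed measurable
  then have "(\<integral>t. (h t - (\<integral>z. h z \<partial>std_normal)) * gauss t \<partial>lborel)
      = (\<integral>t. h t * gauss t \<partial>lborel) - (\<integral>z. h z \<partial>std_normal) * sqrt (2 * pi)"
    using Bochner_Integration.integral_diff[OF _ integrable_mult_right[OF integrable_gauss]]
    by (simp add: left_diff_distrib integral_gauss)
  then show "(\<integral>t. (h t - (\<integral>z. h z \<partial>std_normal)) * gauss t \<partial>lborel) = 0"
    by (simp add: integral_std_normal)
qed

lemma stein_equation_solution:
  fixes h :: "real \<Rightarrow> real"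
  assumes "1-lipschitz_on UNIV h"
  obtains f f' where "\<And>w. (f has_real_derivative f' w) (at w)"
    and "\<And>w. f' w - w * f w = h w - (\<integral>z. h z \<partial>std_normal)"
    and "\<And>w. \<bar>f' w\<bar> \<le> 2" and "\<And>x y. \<bar>f' x - f' y\<bar> \<le> 14 * \<bar>x - y\<bar>"
proof -
  let ?g = "\<lambda>t. h t - (\<integral>z. h z \<partial>std_normal)"
  interpret stein_test_function ?g
    by (rule stein_test_function_centered[OF assms])
  show ?thesis
    by (rule that[of "stein_solution ?g" "\<lambda>w. w * stein_solution ?g w + ?g w"])
      (use stein_solution_has_real_derivative stein_solution_bounds
        stein_solution_derivative_lipschitz in auto)
qed

section \<open>Stein's method under local dependence\<close>

lemma taylor_remainder_le:
  fixes f f' :: "real \<Rightarrow> real"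
  assumes der: "\<And>w. (f has_real_derivative f' w) (at w)"
    and lip: "\<And>x y. \<bar>f' x - f' y\<bar> \<le> B * \<bar>x - y\<bar>"
  shows "\<bar>f a - f (a - v) - v * f' a\<bar> \<le> B * v\<^sup>2"
proof -
  have "0 \<le> B"
    using lip[of 0 1] abs_ge_zero[of "f' 0 - f' 1"] by simp
  have near: "\<bar>z - a\<bar> \<le> \<bar>v\<bar>" if "z \<in> closed_segment (a - v) a" for z
    using that by (cases "0 \<le> v") (auto simp: closed_segment_eq_real_ivl)
  have "\<bar>(f a - a * f' a) - (f (a - v) - (a - v) * f' a)\<bar> \<le> (B * \<bar>v\<bar>) * \<bar>a - (a - v)\<bar>"
  proof (rule field_differentiable_bound[where S = "closed_segment (a - v) a" and x = a and y = "a - v"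
        and f = "\<lambda>u. f u - u * f' a" and f' = "\<lambda>z. f' z - f' a", simplified real_norm_def])
    show "((\<lambda>u. f u - u * f' a) has_field_derivative f' z - f' a) (at z within closed_segment (a - v) a)"
      for z
      using has_field_derivative_at_within[OF DERIV_diff[OF der DERIV_cmult_right[OF DERIV_ident]]]
      by simp
    show "\<bar>f' z - f' a\<bar> \<le> B * \<bar>v\<bar>" if "z \<in> closed_segment (a - v) a" for z
      using lip[of z a] mult_left_mono[OF near[OF that] \<open>0 \<le> B\<close>] by linarith
  qed auto
  then show ?thesis
    by (simp add: algebra_simps power2_eq_square)
qed

lemma stein_local_expansion:
  fixes X V :: "'i \<Rightarrow> real" and f f' :: "real \<Rightarrow> real"
  assumes "W = (\<Sum>i\<in>I. X i)"
  shows "f' W - W * f W = f' W * (1 - (\<Sum>i\<in>I. X i * V i))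
    - (\<Sum>i\<in>I. X i * (f W - f (W - V i) - V i * f' W)) - (\<Sum>i\<in>I. X i * f (W - V i))"
proof -
  have "W * f W = (\<Sum>i\<in>I. X i * f W)"
    by (simp add: assms sum_distrib_right)
  also have "\<dots> = (\<Sum>i\<in>I. X i * f (W - V i) + f' W * (X i * V i) + X i * (f W - f (W - V i) - V i * f' W))"
    by (rule sum.cong) (auto simp: algebra_simps)
  also have "\<dots> = (\<Sum>i\<in>I. X i * f (W - V i)) + f' W * (\<Sum>i\<in>I. X i * V i)
      + (\<Sum>i\<in>I. X i * (f W - f (W - V i) - V i * f' W))"
    by (simp add: sum.distrib sum_distrib_left)
  finally show ?thesis
    by (simp add: algebra_simps)
qed

text \<open>The hypothesis \<open>indep\<close> says that \<open>X i\<close> is centred and independent of \<open>W - V i\<close>, where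
  \<open>W = (\<Sum>j\<in>I. X j)\<close> and \<open>V i = (\<Sum>j\<in>N i. X j)\<close>. In \<open>stein_local_expansion\<close> the last sum
  then has mean zero, and the middle one is a sum of Taylor remainders.\<close>

lemma stein_local_dependence:
  fixes M :: "'a pmf" and X :: "'i \<Rightarrow> 'a \<Rightarrow> real" and N :: "'i \<Rightarrow> 'i set"
    and f f' :: "real \<Rightarrow> real"
  assumes finite_M: "finite (set_pmf M)"
    and indep: "\<And>i G. i \<in> I \<Longrightarrow> measure_pmf.expectation M
        (\<lambda>x. X i x * G ((\<Sum>j\<in>I. X j x) - (\<Sum>j\<in>N i. X j x))) = 0"
    and der: "\<And>w. (f has_real_derivative f' w) (at w)"
    and lip: "\<And>x y. \<bar>f' x - f' y\<bar> \<le> B * \<bar>x - y\<bar>"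
    and bnd: "\<And>w. \<bar>f' w\<bar> \<le> A"
  shows "\<bar>measure_pmf.expectation M (\<lambda>x. f' (\<Sum>j\<in>I. X j x) - (\<Sum>j\<in>I. X j x) * f (\<Sum>j\<in>I. X j x))\<bar>
    \<le> B * (\<Sum>i\<in>I. measure_pmf.expectation M (\<lambda>x. \<bar>X i x\<bar> * (\<Sum>j\<in>N i. X j x)\<^sup>2))
      + A * measure_pmf.expectation M (\<lambda>x. \<bar>1 - (\<Sum>i\<in>I. X i x * (\<Sum>j\<in>N i. X j x))\<bar>)"
proof -
  let ?E = "measure_pmf.expectation M"
  have int: "integrable (measure_pmf M) (F :: 'a \<Rightarrow> real)" for F
    by (rule integrable_measure_pmf_finite[OF finite_M])
  define W where "W x = (\<Sum>j\<in>I. X j x)" for x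
  define V where "V i x = (\<Sum>j\<in>N i. X j x)" for i x
  define T where "T x = (\<Sum>i\<in>I. X i x * V i x)" for x
  define r where "r i x = f (W x) - f (W x - V i x) - V i x * f' (W x)" for i x
  have "f' (W x) - W x * f (W x) = f' (W x) * (1 - T x) - (\<Sum>i\<in>I. X i x * r i x)
      - (\<Sum>i\<in>I. X i x * f (W x - V i x))" for x
    unfolding T_def r_def by (rule stein_local_expansion) (simp add: W_def)
  then have "?E (\<lambda>x. f' (W x) - W x * f (W x))
      = ?E (\<lambda>x. f' (W x) * (1 - T x)) - (\<Sum>i\<in>I. ?E (\<lambda>x. X i x * r i x))
        - (\<Sum>i\<in>I. ?E (\<lambda>x. X i x * f (W x - V i x)))"
    by (simp add: Bochner_Integration.integral_diff[OF int int] Bochner_Integration.integral_sum[OF int])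
  also have "(\<Sum>i\<in>I. ?E (\<lambda>x. X i x * f (W x - V i x))) = 0"
    using indep[of _ f] by (simp add: W_def V_def)
  finally have decomp: "?E (\<lambda>x. f' (W x) - W x * f (W x))
      = ?E (\<lambda>x. f' (W x) * (1 - T x)) - (\<Sum>i\<in>I. ?E (\<lambda>x. X i x * r i x))"
    by simp
  have "\<bar>?E (\<lambda>x. f' (W x) * (1 - T x))\<bar> \<le> ?E (\<lambda>x. A * \<bar>1 - T x\<bar>)"
    using bnd by (intro order_trans[OF integral_abs_bound] integral_mono int)
      (auto simp: abs_mult intro: mult_right_mono)
  moreover have "\<bar>?E (\<lambda>x. X i x * r i x)\<bar> \<le> ?E (\<lambda>x. B * (\<bar>X i x\<bar> * (V i x)\<^sup>2))" for i
  proof (intro order_trans[OF integral_abs_bound] integral_mono int)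
    fix x
    have "\<bar>r i x\<bar> \<le> B * (V i x)\<^sup>2"
      unfolding r_def by (rule taylor_remainder_le[OF der lip])
    then have "\<bar>X i x\<bar> * \<bar>r i x\<bar> \<le> \<bar>X i x\<bar> * (B * (V i x)\<^sup>2)"
      by (rule mult_left_mono) simp
    then show "\<bar>X i x * r i x\<bar> \<le> B * (\<bar>X i x\<bar> * (V i x)\<^sup>2)"
      by (simp add: abs_mult mult_ac)
  qed
  ultimately have "\<bar>?E (\<lambda>x. f' (W x) * (1 - T x))\<bar> + (\<Sum>i\<in>I. \<bar>?E (\<lambda>x. X i x * r i x)\<bar>)
      \<le> A * ?E (\<lambda>x. \<bar>1 - T x\<bar>) + B * (\<Sum>i\<in>I. ?E (\<lambda>x. \<bar>X i x\<bar> * (V i x)\<^sup>2))"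
    by (simp add: sum_distrib_left add_mono sum_mono)
  moreover have "\<bar>?E (\<lambda>x. f' (W x) - W x * f (W x))\<bar>
      \<le> \<bar>?E (\<lambda>x. f' (W x) * (1 - T x))\<bar> + (\<Sum>i\<in>I. \<bar>?E (\<lambda>x. X i x * r i x)\<bar>)"
    unfolding decomp by (rule order_trans[OF abs_triangle_ineq4 add_left_mono[OF sum_abs]])
  ultimately show ?thesis
    unfolding W_def V_def T_def by linarith
qed

lemma wasserstein_local_dependence:
  fixes M :: "'a pmf" and X :: "'i \<Rightarrow> 'a \<Rightarrow> real" and N :: "'i \<Rightarrow> 'i set"
    and h :: "real \<Rightarrow> real"
  assumes finite_M: "finite (set_pmf M)"
    and indep: "\<And>i G. i \<in> I \<Longrightarrow> measure_pmf.expectation M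
        (\<lambda>x. X i x * G ((\<Sum>j\<in>I. X j x) - (\<Sum>j\<in>N i. X j x))) = 0"
    and h: "1-lipschitz_on UNIV h"
  shows "\<bar>measure_pmf.expectation M (\<lambda>x. h (\<Sum>j\<in>I. X j x)) - (\<integral>z. h z \<partial>std_normal)\<bar>
    \<le> 14 * (\<Sum>i\<in>I. measure_pmf.expectation M (\<lambda>x. \<bar>X i x\<bar> * (\<Sum>j\<in>N i. X j x)\<^sup>2))
      + 2 * measure_pmf.expectation M (\<lambda>x. \<bar>1 - (\<Sum>i\<in>I. X i x * (\<Sum>j\<in>N i. X j x))\<bar>)"
proof -
  obtain f f' where der: "\<And>w. (f has_real_derivative f' w) (at w)"
    and stein: "\<And>w. f' w - w * f w = h w - (\<integral>z. h z \<partial>std_normal)"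
    and bnd: "\<And>w. \<bar>f' w\<bar> \<le> 2" and lip: "\<And>x y. \<bar>f' x - f' y\<bar> \<le> 14 * \<bar>x - y\<bar>"
    using stein_equation_solution[OF h] by blast
  have "measure_pmf.expectation M (\<lambda>x. h (\<Sum>j\<in>I. X j x)) - (\<integral>z. h z \<partial>std_normal)
      = measure_pmf.expectation M (\<lambda>x. h (\<Sum>j\<in>I. X j x) - (\<integral>z. h z \<partial>std_normal))"
    by (simp add: integrable_measure_pmf_finite[OF finite_M] measure_pmf.prob_space)
  also have "\<dots> = measure_pmf.expectation M
      (\<lambda>x. f' (\<Sum>j\<in>I. X j x) - (\<Sum>j\<in>I. X j x) * f (\<Sum>j\<in>I. X j x))"
    by (simp add: stein)
  finally show ?thesis
    using stein_local_dependence[OF finite_M indep der lip bnd] by simp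
qed

section \<open>Walsh characters of the random graph\<close>

lemma finite_Kedges: "finite (Kedges n)"
  by (rule finite_subset[of _ "Pow {0..<n}"]) (auto simp: Kedges_def)

lemma finite_set_pmf_Gnp: "finite (set_pmf (Gnp n p))"
  unfolding Gnp_def using finite_Kedges
  by (simp add: set_Pi_pmf finite_PiE_dflt finite_subset[of _ UNIV])

lemma finite_set_pmf_bernoulli: "finite (set_pmf (bernoulli_pmf p))"
  by (rule finite_subset[of _ UNIV]) auto

lemma finite_Union_subset_Kedges: "\<forall>S\<in>set Ss. S \<subseteq> Kedges n \<Longrightarrow> finite (\<Union>(set Ss))"
  by (rule finite_subset[OF _ finite_Kedges]) auto

lemma integrable_Gnp [simp, intro]: "integrable (measure_pmf (Gnp n p)) (F :: _ \<Rightarrow> real)"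
  by (rule integrable_measure_pmf_finite[OF finite_set_pmf_Gnp])

lemma expectation_abs_le_sqrt:
  fixes Y :: "'a \<Rightarrow> real"
  assumes "finite (set_pmf M)"
  shows "measure_pmf.expectation M (\<lambda>x. \<bar>Y x\<bar>) \<le> sqrt (measure_pmf.expectation M (\<lambda>x. (Y x)\<^sup>2))"
proof -
  have "0 \<le> measure_pmf.variance M (\<lambda>x. \<bar>Y x\<bar>)"
    by (intro integral_nonneg_AE) auto
  also have "measure_pmf.variance M (\<lambda>x. \<bar>Y x\<bar>)
      = measure_pmf.expectation M (\<lambda>x. (Y x)\<^sup>2) - (measure_pmf.expectation M (\<lambda>x. \<bar>Y x\<bar>))\<^sup>2"
    using integrable_measure_pmf_finite[OF assms] by (subst measure_pmf.variance_eq) auto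
  finally show ?thesis
    by (intro real_le_rsqrt) simp
qed

lemma expectation_pair_pmf_mult:
  fixes g :: "'a \<Rightarrow> real" and G :: "'b \<Rightarrow> real"
  assumes "finite (set_pmf M)" "finite (set_pmf N)"
  shows "measure_pmf.expectation (pair_pmf M N) (\<lambda>z. g (fst z) * G (snd z))
    = measure_pmf.expectation M g * measure_pmf.expectation N G"
proof -
  have "measure_pmf.expectation (pair_pmf M N) (\<lambda>z. g (fst z) * G (snd z))
      = (\<Sum>(a, b)\<in>set_pmf M \<times> set_pmf N. (pmf M a * g a) * (pmf N b * G b))"
    using assms by (subst integral_measure_pmf[of "set_pmf M \<times> set_pmf N"])
      (auto simp: pmf_pair intro!: sum.cong)
  also have "\<dots> = (\<Sum>a\<in>set_pmf M. pmf M a * g a) * (\<Sum>b\<in>set_pmf N. pmf N b * G b)"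
    by (simp add: sum.cartesian_product[symmetric] sum_product)
  also have "\<dots> = measure_pmf.expectation M g * measure_pmf.expectation N G"
    using assms by (simp add: integral_measure_pmf[of "set_pmf M"] integral_measure_pmf[of "set_pmf N"])
  finally show ?thesis .
qed

lemma expectation_Pi_pmf_factor:
  fixes g :: "'b \<Rightarrow> real" and F :: "('a \<Rightarrow> 'b) \<Rightarrow> real"
  assumes "finite A" and "e \<in> A" and "\<And>a. finite (set_pmf (q a))"
    and indep: "\<And>x b. F (x(e := b)) = F x"
  shows "measure_pmf.expectation (Pi_pmf A d q) (\<lambda>x. g (x e) * F x)
    = measure_pmf.expectation (q e) g * measure_pmf.expectation (Pi_pmf A d q) F"
proof -
  let ?P = "pair_pmf (q e) (Pi_pmf (A - {e}) d q)"
  have "Pi_pmf A d q = map_pmf (\<lambda>(y, f). f(e := y)) ?P"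
    using assms(1,2) Pi_pmf_insert[of "A - {e}" e d q] by (simp add: insert_absorb)
  then have "measure_pmf.expectation (Pi_pmf A d q) G = measure_pmf.expectation ?P (\<lambda>z. G ((snd z)(e := fst z)))"
    for G :: "('a \<Rightarrow> 'b) \<Rightarrow> real"
    by (simp add: case_prod_beta)
  moreover have "finite (set_pmf (Pi_pmf (A - {e}) d q))"
    using assms(1,3) by (simp add: set_Pi_pmf finite_PiE_dflt)
  ultimately show ?thesis
    using expectation_pair_pmf_mult[of "q e" "Pi_pmf (A - {e}) d q" g F] assms(3) by (simp add: indep)
qed

definition chi_val :: "real \<Rightarrow> bool \<Rightarrow> real" where
  "chi_val p b = ((if b then 1 else 0) - p) / sqrt (p * (1 - p))"

definition chi_set :: "real \<Rightarrow> nat set set \<Rightarrow> (nat set \<Rightarrow> bool) \<Rightarrow> real" where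
  "chi_set p S x = (\<Prod>e\<in>S. chi p x e)"

definition chi_list :: "real \<Rightarrow> nat set set list \<Rightarrow> (nat set \<Rightarrow> bool) \<Rightarrow> real" where
  "chi_list p Ss x = prod_list (map (\<lambda>S. chi_set p S x) Ss)"

definition edge_count :: "nat set set list \<Rightarrow> nat set \<Rightarrow> nat" where
  "edge_count Ss e = length (filter (\<lambda>S. e \<in> S) Ss)"

definition chi_moment :: "real \<Rightarrow> nat \<Rightarrow> real" where
  "chi_moment p j = measure_pmf.expectation (bernoulli_pmf p) (\<lambda>b. chi_val p b ^ j)"

definition chi_bound :: "real \<Rightarrow> real" where
  "chi_bound p = 1 / sqrt (p * (1 - p))"

lemma chi_eq_chi_val: "chi p x e = chi_val p (x e)"
  by (simp add: chi_def chi_val_def)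

lemma chi_set_fun_upd: "e \<notin> S \<Longrightarrow> chi_set p S (x(e := b)) = chi_set p S x"
  unfolding chi_set_def chi_def by (rule prod.cong) auto

lemma chi_list_append: "chi_list p (Ss @ Ts) x = chi_list p Ss x * chi_list p Ts x"
  by (simp add: chi_list_def)

lemma edge_count_Nil [simp]: "edge_count [] e = 0"
  and edge_count_Cons [simp]: "edge_count (S # Ss) e = (if e \<in> S then 1 else 0) + edge_count Ss e"
  and edge_count_append [simp]: "edge_count (Ss @ Ts) e = edge_count Ss e + edge_count Ts e"
  by (simp_all add: edge_count_def)

lemma edge_count_eq_0: "e \<notin> \<Union>(set Ss) \<Longrightarrow> edge_count Ss e = 0"
  by (induction Ss) auto

lemma chi_list_eq_prod_power:
  assumes "finite V" "\<Union>(set Ss) \<subseteq> V"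
  shows "chi_list p Ss x = (\<Prod>e\<in>V. chi p x e ^ edge_count Ss e)"
  using assms(2)
proof (induction Ss)
  case (Cons S Ss)
  have "chi_set p S x = (\<Prod>e\<in>V. chi p x e ^ (if e \<in> S then 1 else 0))"
    unfolding chi_set_def using Cons.prems
    by (intro prod.mono_neutral_cong_left[OF assms(1)]) auto
  with Cons show ?case
    by (simp add: chi_list_def prod.distrib[symmetric] power_add)
qed (simp add: chi_list_def)

locale edge_probability =
  fixes p :: real
  assumes p_pos: "0 < p" and p_less_1: "p < 1"
begin

lemma chi_moment_1: "chi_moment p 1 = 0"
  using p_pos p_less_1 by (simp add: chi_moment_def chi_val_def field_simps)

lemma chi_moment_2: "chi_moment p 2 = 1"
proof -
  have pq: "0 < p * (1 - p)"
    using p_pos p_less_1 by simp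
  have "chi_moment p 2 = (p * (1 - p)\<^sup>2 + (1 - p) * p\<^sup>2) / (p * (1 - p))"
    using p_pos p_less_1 pq less_imp_neq[OF p_pos] less_imp_neq[OF p_less_1]
    by (simp add: chi_moment_def chi_val_def power_divide add_divide_distrib)
  also have "\<dots> = (p * (1 - p)) / (p * (1 - p))"
    by (simp add: power2_eq_square algebra_simps)
  also have "\<dots> = 1"
    using less_imp_neq[OF p_pos] less_imp_neq[OF p_less_1] by simp
  finally show ?thesis .
qed

lemma one_le_chi_bound: "1 \<le> chi_bound p"
proof -
  have "p * (1 - p) \<le> 1"
    using p_pos p_less_1 by (intro mult_le_one) auto
  moreover have "0 < p * (1 - p)"
    using p_pos p_less_1 by simp
  ultimately show ?thesis
    by (simp add: chi_bound_def le_divide_eq)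
qed

lemma abs_chi_val_le: "\<bar>chi_val p b\<bar> \<le> chi_bound p"
proof -
  have "\<bar>(if b then 1 else 0) - p\<bar> \<le> 1"
    using p_pos p_less_1 by auto
  moreover have "0 < sqrt (p * (1 - p))"
    using p_pos p_less_1 by simp
  ultimately show ?thesis
    unfolding chi_val_def chi_bound_def abs_divide by (simp add: divide_right_mono)
qed

lemma abs_chi_set_le: "finite S \<Longrightarrow> \<bar>chi_set p S x\<bar> \<le> chi_bound p ^ card S"
  unfolding chi_set_def abs_prod chi_eq_chi_val
  by (rule order_trans[OF prod_mono[of _ _ "\<lambda>_. chi_bound p"]]) (simp_all add: abs_chi_val_le)

lemma abs_chi_list_le:
  assumes "\<forall>S\<in>set Ss. finite S \<and> card S \<le> k"
  shows "\<bar>chi_list p Ss x\<bar> \<le> chi_bound p ^ (k * length Ss)"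
  using assms
proof (induction Ss)
  case (Cons S Ss)
  have "\<bar>chi_set p S x\<bar> \<le> chi_bound p ^ k"
    using Cons.prems abs_chi_set_le[of S x] one_le_chi_bound
    by (auto intro: order_trans[OF _ power_increasing])
  then have "\<bar>chi_set p S x\<bar> * \<bar>chi_list p Ss x\<bar> \<le> chi_bound p ^ k * chi_bound p ^ (k * length Ss)"
    using Cons by (intro mult_mono) auto
  then show ?case
    by (simp add: chi_list_def abs_mult power_add)
qed (simp add: chi_list_def)

lemma expectation_chi_mult_eq_0:
  assumes "e \<in> Kedges n" and "\<And>x b. F (x(e := b)) = F x"
  shows "measure_pmf.expectation (Gnp n p) (\<lambda>x. chi p x e * F x) = 0"
proof -
  have "measure_pmf.expectation (Pi_pmf (Kedges n) False (\<lambda>_. bernoulli_pmf p)) (\<lambda>x. chi_val p (x e) * F x)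
      = measure_pmf.expectation (bernoulli_pmf p) (chi_val p)
        * measure_pmf.expectation (Pi_pmf (Kedges n) False (\<lambda>_. bernoulli_pmf p)) F"
    by (rule expectation_Pi_pmf_factor[where F = F, OF finite_Kedges assms(1) finite_set_pmf_bernoulli assms(2)])
  then show ?thesis
    using chi_moment_1 by (simp add: Gnp_def chi_eq_chi_val chi_moment_def)
qed

lemma expectation_prod_chi_power:
  assumes "finite U" "U \<subseteq> Kedges n"
  shows "measure_pmf.expectation (Gnp n p) (\<lambda>x. \<Prod>e\<in>U. chi p x e ^ k e) = (\<Prod>e\<in>U. chi_moment p (k e))"
  using assms
proof (induction U rule: finite_induct)
  case (insert e U)
  let ?F = "\<lambda>x. \<Prod>e'\<in>U. chi p x e' ^ k e'"
  have "?F (x(e := b)) = ?F x" for x b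
    using insert.hyps(2) by (auto simp: chi_def intro!: prod.cong)
  then have "measure_pmf.expectation (Pi_pmf (Kedges n) False (\<lambda>_. bernoulli_pmf p))
        (\<lambda>x. chi_val p (x e) ^ k e * ?F x)
      = measure_pmf.expectation (bernoulli_pmf p) (\<lambda>b. chi_val p b ^ k e)
        * measure_pmf.expectation (Pi_pmf (Kedges n) False (\<lambda>_. bernoulli_pmf p)) ?F"
    using insert.prems
    by (intro expectation_Pi_pmf_factor[where F = ?F, OF finite_Kedges _ finite_set_pmf_bernoulli]) auto
  with insert show ?case
    by (simp add: Gnp_def chi_eq_chi_val chi_moment_def)
qed simp

lemma expectation_chi_list:
  assumes "\<forall>S\<in>set Ss. S \<subseteq> Kedges n"
  shows "measure_pmf.expectation (Gnp n p) (chi_list p Ss) = (\<Prod>e\<in>\<Union>(set Ss). chi_moment p (edge_count Ss e))"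
proof -
  have "\<Union>(set Ss) \<subseteq> Kedges n" and "finite (\<Union>(set Ss))"
    using assms finite_Union_subset_Kedges by auto
  moreover have "chi_list p Ss = (\<lambda>x. \<Prod>e\<in>\<Union>(set Ss). chi p x e ^ edge_count Ss e)"
    using \<open>finite (\<Union>(set Ss))\<close> by (intro ext chi_list_eq_prod_power) auto
  ultimately show ?thesis
    by (simp add: expectation_prod_chi_power)
qed

lemma expectation_chi_list_eq_0:
  assumes "\<forall>S\<in>set Ss. S \<subseteq> Kedges n" and "edge_count Ss e = 1"
  shows "measure_pmf.expectation (Gnp n p) (chi_list p Ss) = 0"
proof -
  have "finite (\<Union>(set Ss))"
    using assms(1) by (rule finite_Union_subset_Kedges)
  moreover have "e \<in> \<Union>(set Ss)"
    using assms(2) edge_count_eq_0 by fastforce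
  moreover have "chi_moment p (edge_count Ss e) = 0"
    by (subst assms(2)) (rule chi_moment_1)
  ultimately show ?thesis
    unfolding expectation_chi_list[OF assms(1)] by (intro prod_zero bexI[of _ e])
qed

lemma expectation_chi_list_append:
  assumes Ss: "\<forall>S\<in>set Ss. S \<subseteq> Kedges n" and Ts: "\<forall>S\<in>set Ts. S \<subseteq> Kedges n"
    and disj: "\<Union>(set Ss) \<inter> \<Union>(set Ts) = {}"
  shows "measure_pmf.expectation (Gnp n p) (chi_list p (Ss @ Ts))
    = measure_pmf.expectation (Gnp n p) (chi_list p Ss) * measure_pmf.expectation (Gnp n p) (chi_list p Ts)"
proof -
  let ?U = "\<Union>(set Ss)" and ?V = "\<Union>(set Ts)"
  let ?m = "\<lambda>e. chi_moment p (edge_count (Ss @ Ts) e)"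
  have fin: "finite ?U" "finite ?V"
    using Ss Ts by (simp_all add: finite_Union_subset_Kedges)
  have "measure_pmf.expectation (Gnp n p) (chi_list p (Ss @ Ts)) = (\<Prod>e\<in>?U \<union> ?V. ?m e)"
    using Ss Ts expectation_chi_list[of "Ss @ Ts" n] by auto
  also have "\<dots> = (\<Prod>e\<in>?U. ?m e) * (\<Prod>e\<in>?V. ?m e)"
    by (rule prod.union_disjoint[OF fin disj])
  also have "(\<Prod>e\<in>?U. ?m e) = (\<Prod>e\<in>?U. chi_moment p (edge_count Ss e))"
  proof (rule prod.cong)
    fix e
    assume "e \<in> ?U"
    then have "edge_count Ts e = 0"
      using disj by (intro edge_count_eq_0) blast
    then show "?m e = chi_moment p (edge_count Ss e)"
      by simp
  qed simp
  also have "(\<Prod>e\<in>?V. ?m e) = (\<Prod>e\<in>?V. chi_moment p (edge_count Ts e))"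
  proof (rule prod.cong)
    fix e
    assume "e \<in> ?V"
    then have "edge_count Ss e = 0"
      using disj by (intro edge_count_eq_0) blast
    then show "?m e = chi_moment p (edge_count Ts e)"
      by simp
  qed simp
  finally show ?thesis
    by (simp only: expectation_chi_list[OF Ss] expectation_chi_list[OF Ts])
qed

lemma expectation_chi_set_mult:
  assumes "S \<subseteq> Kedges n" "S' \<subseteq> Kedges n"
  shows "measure_pmf.expectation (Gnp n p) (\<lambda>x. chi_set p S x * chi_set p S' x) = (if S = S' then 1 else 0)"
proof -
  have eq: "(\<lambda>x. chi_set p S x * chi_set p S' x) = chi_list p [S, S']"
    by (simp add: chi_list_def fun_eq_iff)
  show ?thesis
    unfolding eq
  proof (cases "S = S'")
    case True
    have "measure_pmf.expectation (Gnp n p) (chi_list p [S, S'])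
        = (\<Prod>e\<in>S \<union> S'. chi_moment p (edge_count [S, S'] e))"
      using assms by (simp add: expectation_chi_list)
    also have "\<dots> = (\<Prod>e\<in>S \<union> S'. 1)"
    proof (rule prod.cong)
      fix e
      assume "e \<in> S \<union> S'"
      then have "edge_count [S, S'] e = 2"
        using True by simp
      then show "chi_moment p (edge_count [S, S'] e) = 1"
        by (simp add: chi_moment_2)
    qed simp
    finally show "measure_pmf.expectation (Gnp n p) (chi_list p [S, S']) = (if S = S' then 1 else 0)"
      using True by simp
  next
    case False
    then obtain e where "e \<in> S \<and> e \<notin> S' \<or> e \<in> S' \<and> e \<notin> S"
      by blast
    then have "edge_count [S, S'] e = 1"
      by auto
    then show "measure_pmf.expectation (Gnp n p) (chi_list p [S, S']) = (if S = S' then 1 else 0)"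
      using False assms by (simp add: expectation_chi_list_eq_0)
  qed
qed

lemma expectation_chi_set:
  assumes "S \<subseteq> Kedges n" "S \<noteq> {}"
  shows "measure_pmf.expectation (Gnp n p) (chi_set p S) = 0"
proof -
  obtain e where "e \<in> S"
    using assms(2) by blast
  then have "measure_pmf.expectation (Gnp n p) (chi_list p [S]) = 0"
    using assms(1) by (intro expectation_chi_list_eq_0[of _ _ e]) auto
  moreover have "chi_list p [S] = chi_set p S"
    by (simp add: chi_list_def fun_eq_iff)
  ultimately show ?thesis
    by simp
qed

lemma expectation_sum_chi_set_square:
  assumes "J \<subseteq> Pow (Kedges n)"
  shows "measure_pmf.expectation (Gnp n p) (\<lambda>x. (\<Sum>S\<in>J. a S * chi_set p S x)\<^sup>2) = (\<Sum>S\<in>J. (a S)\<^sup>2)"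
proof -
  have "finite J"
    using assms finite_subset finite_Kedges by blast
  have "measure_pmf.expectation (Gnp n p) (\<lambda>x. (\<Sum>S\<in>J. a S * chi_set p S x)\<^sup>2)
      = (\<Sum>S\<in>J. \<Sum>S'\<in>J. a S * a S' * measure_pmf.expectation (Gnp n p) (\<lambda>x. chi_set p S x * chi_set p S' x))"
    by (simp add: power2_eq_square sum_product Bochner_Integration.integral_sum mult_ac)
  also have "\<dots> = (\<Sum>S\<in>J. \<Sum>S'\<in>J. if S = S' then (a S)\<^sup>2 else 0)"
  proof (intro sum.cong refl)
    fix S S'
    assume "S \<in> J" "S' \<in> J"
    then have "S \<subseteq> Kedges n" "S' \<subseteq> Kedges n"
      using assms by auto
    then show "a S * a S' * measure_pmf.expectation (Gnp n p) (\<lambda>x. chi_set p S x * chi_set p S' x)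
        = (if S = S' then (a S)\<^sup>2 else 0)"
      by (simp add: expectation_chi_set_mult power2_eq_square)
  qed
  finally show ?thesis
    using \<open>finite J\<close> by simp
qed

lemma variance_sum_chi_set:
  assumes "J \<subseteq> Pow (Kedges n)" "{} \<notin> J"
  shows "measure_pmf.variance (Gnp n p) (\<lambda>x. \<Sum>S\<in>J. a S * chi_set p S x) = (\<Sum>S\<in>J. (a S)\<^sup>2)"
proof -
  have "measure_pmf.expectation (Gnp n p) (\<lambda>x. \<Sum>S\<in>J. a S * chi_set p S x)
      = (\<Sum>S\<in>J. a S * measure_pmf.expectation (Gnp n p) (chi_set p S))"
    by (simp add: Bochner_Integration.integral_sum)
  also have "\<dots> = 0"
  proof (rule sum.neutral, intro ballI)
    fix S
    assume "S \<in> J"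
    then have "S \<subseteq> Kedges n" "S \<noteq> {}"
      using assms by auto
    then show "a S * measure_pmf.expectation (Gnp n p) (chi_set p S) = 0"
      by (simp add: expectation_chi_set)
  qed
  finally show ?thesis
    using expectation_sum_chi_set_square[OF assms(1)] by simp
qed

end

lemma chi_bound_le:
  assumes "0 < lam" "lam < p" "p < 1 - lam"
  shows "chi_bound p \<le> sqrt (2 / lam)"
proof -
  have "lam / 2 \<le> lam * (1 - lam)"
    using assms by (simp add: field_simps)
  also have "\<dots> \<le> p * (1 - p)"
    using mult_nonneg_nonneg[of "p - lam" "1 - lam - p"] assms by (simp add: algebra_simps)
  finally have "sqrt (lam / 2) \<le> sqrt (p * (1 - p))"
    by simp
  then have "1 / sqrt (p * (1 - p)) \<le> 1 / sqrt (lam / 2)"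
    using assms by (intro divide_left_mono) auto
  then show ?thesis
    by (simp add: chi_bound_def real_sqrt_divide)
qed

section \<open>Three-vertex subgraphs of the complete graph\<close>

definition edges_on :: "nat set \<Rightarrow> nat set set" where
  "edges_on V = {e. e \<subseteq> V \<and> card e = 2}"

definition subgraphs3 :: "nat \<Rightarrow> nat set set set" where
  "subgraphs3 n = {E. E \<subseteq> Kedges n \<and> card (vtx E) = 3}"

lemma finite_edges_on: "finite V \<Longrightarrow> finite (edges_on V)"
  by (simp add: edges_on_def)

lemma card_edges_on: "finite V \<Longrightarrow> card (edges_on V) = card V choose 2"
  unfolding edges_on_def by (rule n_subsets)

lemma edges_on_mono: "A \<subseteq> B \<Longrightarrow> edges_on A \<subseteq> edges_on B"
  by (auto simp: edges_on_def)

lemma finite_subgraphs3: "finite (subgraphs3 n)"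
  by (rule finite_subset[of _ "Pow (Kedges n)"]) (auto simp: subgraphs3_def finite_Kedges)

context
  fixes E :: "nat set set" and n :: nat
  assumes E: "E \<in> subgraphs3 n"
begin

lemma subgraphs3_subset_Kedges: "E \<subseteq> Kedges n"
  using E by (simp add: subgraphs3_def)

lemma subgraphs3_card_vtx: "card (vtx E) = 3"
  using E by (simp add: subgraphs3_def)

lemma subgraphs3_finite_vtx: "finite (vtx E)"
  using subgraphs3_card_vtx by (metis card.infinite zero_neq_numeral)

lemma subgraphs3_edge: "g \<in> E \<Longrightarrow> card g = 2 \<and> g \<subseteq> vtx E"
  using subgraphs3_subset_Kedges by (auto simp: Kedges_def vtx_def)

lemma subgraphs3_vtx_subset: "vtx E \<subseteq> {0..<n}"
  using subgraphs3_subset_Kedges by (auto simp: Kedges_def vtx_def)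

lemma subgraphs3_subset_edges_on: "E \<subseteq> edges_on (vtx E)"
  using subgraphs3_edge by (auto simp: edges_on_def)

lemma subgraphs3_card_le: "card E \<le> 3"
proof -
  have "card E \<le> card (edges_on (vtx E))"
    by (rule card_mono[OF finite_edges_on[OF subgraphs3_finite_vtx] subgraphs3_subset_edges_on])
  also have "\<dots> = 3"
    by (simp add: card_edges_on[OF subgraphs3_finite_vtx] subgraphs3_card_vtx numeral_3_eq_3 numeral_2_eq_2)
  finally show ?thesis .
qed

lemma subgraphs3_nonempty: "E \<noteq> {}"
  using subgraphs3_card_vtx by (auto simp: vtx_def)

end

lemma subgraphs3_eq_empty: "n < 3 \<Longrightarrow> subgraphs3 n = {}"
  using card_mono[OF _ subgraphs3_vtx_subset] subgraphs3_card_vtx by fastforce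

lemma graph_iso_sym: "graph_iso G H \<Longrightarrow> graph_iso H G"
proof -
  assume "graph_iso G H"
  then obtain f where f: "bij_betw f (vtx G) (vtx H)" "(\<lambda>e. f ` e) ` G = H"
    unfolding graph_iso_def by blast
  define g where "g = the_inv_into (vtx G) f"
  have inv: "g ` f ` e = e" if "e \<subseteq> vtx G" for e
  proof -
    have "g ` f ` e = (g \<circ> f) ` e"
      by (simp add: image_comp)
    also have "\<dots> = e"
      using that f(1) unfolding g_def by (auto simp: bij_betw_def the_inv_into_f_f subset_iff image_iff)
    finally show ?thesis .
  qed
  have "(\<lambda>e. g ` e) ` H = (\<lambda>e. g ` f ` e) ` G"
    using f(2) by auto
  also have "\<dots> = (\<lambda>e. e) ` G"
    using inv by (intro image_cong) (auto simp: vtx_def)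
  also have "\<dots> = G"
    by simp
  finally have "(\<lambda>e. g ` e) ` H = G" .
  moreover have "bij_betw g (vtx H) (vtx G)"
    unfolding g_def by (rule bij_betw_the_inv_into[OF f(1)])
  ultimately show ?thesis
    unfolding graph_iso_def by blast
qed

lemma graph_iso_trans: "graph_iso F G \<Longrightarrow> graph_iso G H \<Longrightarrow> graph_iso F H"
proof -
  assume "graph_iso F G" "graph_iso G H"
  then obtain f1 f2 where f1: "bij_betw f1 (vtx F) (vtx G)" "(\<lambda>e. f1 ` e) ` F = G"
    and f2: "bij_betw f2 (vtx G) (vtx H)" "(\<lambda>e. f2 ` e) ` G = H"
    unfolding graph_iso_def by blast
  have "bij_betw (f2 \<circ> f1) (vtx F) (vtx H)"
    by (rule bij_betw_trans[OF f1(1) f2(1)])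
  moreover have "(\<lambda>e. (f2 \<circ> f1) ` e) ` F = H"
    using f1(2) f2(2) by (auto simp: image_comp[symmetric] image_image)
  ultimately show ?thesis
    unfolding graph_iso_def by blast
qed

lemma graph_iso_card_vtx: "graph_iso G H \<Longrightarrow> card (vtx G) = card (vtx H)"
  unfolding graph_iso_def using bij_betw_same_card by blast

lemma exists_graph_iso_on:
  assumes H: "is_graph H" "finite (vtx H)" and T: "finite T" "card T = card (vtx H)"
  shows "\<exists>E. graph_iso E H \<and> vtx E = T \<and> E \<subseteq> edges_on T"
proof -
  obtain f where f: "bij_betw f (vtx H) T"
    using finite_same_card_bij[OF H(2) T(1)] T(2) by metis
  define E where "E = (\<lambda>e. f ` e) ` H"
  have vtx_E: "vtx E = T"
    using f unfolding E_def vtx_def bij_betw_def by auto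
  have "graph_iso H E"
    unfolding graph_iso_def using f vtx_E by (auto simp: E_def)
  moreover have "card (f ` e) = 2" if "e \<in> H" for e
  proof -
    have "inj_on f e"
      using that f inj_on_subset unfolding bij_betw_def vtx_def by blast
    then show ?thesis
      using that H(1) by (simp add: card_image is_graph_def)
  qed
  then have "E \<subseteq> edges_on T"
    using vtx_E by (auto simp: E_def edges_on_def vtx_def)
  ultimately show ?thesis
    using graph_iso_sym vtx_E by blast
qed

lemma card_copies3_ge:
  assumes H: "is_graph H" "nv H = 3"
  shows "n choose 3 \<le> card {E \<in> subgraphs3 n. graph_iso E H}"
proof -
  let ?Ts = "{T. T \<subseteq> {0..<n} \<and> card T = 3}"
  have fin: "finite (vtx H)"
    using H(2) unfolding nv_def by (metis card.infinite zero_neq_numeral)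
  define copy where "copy T = (SOME E. graph_iso E H \<and> vtx E = T \<and> E \<subseteq> edges_on T)" for T
  have copy: "graph_iso (copy T) H \<and> vtx (copy T) = T \<and> copy T \<subseteq> edges_on T" if "T \<in> ?Ts" for T
  proof -
    have "finite T" "card T = card (vtx H)"
      using that H(2) finite_subset[of T "{0..<n}"] by (auto simp: nv_def)
    then have "\<exists>E. graph_iso E H \<and> vtx E = T \<and> E \<subseteq> edges_on T"
      by (rule exists_graph_iso_on[OF H(1) fin])
    then show ?thesis
      unfolding copy_def by (rule someI_ex)
  qed
  have "inj_on copy ?Ts"
    by (rule inj_onI) (metis copy)
  moreover have "copy T \<in> {E \<in> subgraphs3 n. graph_iso E H}" if "T \<in> ?Ts" for T
  proof -
    have "copy T \<subseteq> Kedges n"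
      using copy[OF that] that by (auto simp: Kedges_def edges_on_def)
    then show ?thesis
      using copy[OF that] that by (simp add: subgraphs3_def)
  qed
  ultimately have "card ?Ts \<le> card {E \<in> subgraphs3 n. graph_iso E H}"
    by (intro card_inj_on_le) (auto simp: finite_subgraphs3)
  then show ?thesis
    using n_subsets[of "{0..<n}" 3] by simp
qed

lemma choose_le_power: "n choose k \<le> n ^ k"
  by (cases "k \<le> n") (auto simp: binomial_le_pow binomial_eq_0)

lemma card_bounded_subsets:
  assumes "1 \<le> n"
  shows "card {U. U \<subseteq> {0..<n} \<and> card U \<le> k} \<le> (k + 1) * n ^ k"
proof -
  have "{U. U \<subseteq> {0..<n} \<and> card U \<le> k} = (\<Union>j\<in>{0..k}. {U. U \<subseteq> {0..<n} \<and> card U = j})"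
    by auto
  then have "card {U. U \<subseteq> {0..<n} \<and> card U \<le> k} \<le> (\<Sum>j\<in>{0..k}. n choose j)"
    using card_UN_le[of "{0..k}" "\<lambda>j. {U. U \<subseteq> {0..<n} \<and> card U = j}"] by (simp add: n_subsets)
  also have "\<dots> \<le> (\<Sum>j\<in>{0..k}. n ^ k)"
    using assms by (intro sum_mono order_trans[OF choose_le_power power_increasing]) auto
  finally show ?thesis
    by simp
qed

lemma card_lists_Pow_edges_on_le:
  assumes "finite U" "card U \<le> k"
  shows "card {Es. set Es \<subseteq> Pow (edges_on U) \<and> length Es = r} \<le> (2 ^ (k * k)) ^ r"
proof -
  have "card (edges_on U) \<le> card U ^ 2"
    using card_edges_on[OF assms(1)] choose_le_power[of "card U" 2] by simp
  also have "\<dots> \<le> k * k"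
    using power_mono[OF assms(2), of 2] by (simp add: power2_eq_square)
  finally have "(2::nat) ^ card (edges_on U) \<le> 2 ^ (k * k)"
    by (intro power_increasing) auto
  then have "(2 ^ card (edges_on U)) ^ r \<le> ((2::nat) ^ (k * k)) ^ r"
    by (rule power_mono) simp
  then show ?thesis
    using assms(1) by (simp add: card_lists_length_eq finite_edges_on card_Pow)
qed

text \<open>A list of \<open>r\<close> three-vertex subgraphs spanning at most \<open>k\<close> vertices is determined by
  its vertex set \<open>U\<close>, one of at most \<open>(k + 1) * n ^ k\<close> sets, and by \<open>r\<close> subsets of
  \<open>edges_on U\<close>.\<close>

lemma card_lists_subgraphs3_le:
  assumes n: "1 \<le> n"
    and Q: "\<And>Es. Es \<in> Q \<Longrightarrow> length Es = r \<and> set Es \<subseteq> subgraphs3 n \<and> card (\<Union>E\<in>set Es. vtx E) \<le> k"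
  shows "card Q \<le> (k + 1) * n ^ k * (2 ^ (k * k)) ^ r"
proof -
  let ?UU = "{U. U \<subseteq> {0..<n} \<and> card U \<le> k}"
  let ?L = "\<lambda>U. {Es. set Es \<subseteq> Pow (edges_on U) \<and> length Es = r}"
  have "Q \<subseteq> (\<Union>U\<in>?UU. ?L U)"
  proof
    fix Es
    assume Es: "Es \<in> Q"
    define U where "U = (\<Union>E\<in>set Es. vtx E)"
    have "U \<subseteq> {0..<n}"
      unfolding U_def using Q[OF Es] subgraphs3_vtx_subset by blast
    then have "U \<in> ?UU"
      using Q[OF Es] by (simp add: U_def)
    moreover have "E \<subseteq> edges_on U" if "E \<in> set Es" for E
    proof -
      have "E \<subseteq> edges_on (vtx E)"
        using that Q[OF Es] subgraphs3_subset_edges_on by blast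
      also have "\<dots> \<subseteq> edges_on U"
        using that unfolding U_def by (intro edges_on_mono) auto
      finally show ?thesis .
    qed
    ultimately show "Es \<in> (\<Union>U\<in>?UU. ?L U)"
      using Q[OF Es] by auto
  qed
  moreover have "finite (?L U)" if "U \<in> ?UU" for U
    using that finite_subset[of U "{0..<n}"]
    by (intro finite_lists_length_eq) (auto simp: finite_edges_on)
  ultimately have "card Q \<le> card (\<Union>U\<in>?UU. ?L U)"
    by (intro card_mono) auto
  also have "\<dots> \<le> (\<Sum>U\<in>?UU. card (?L U))"
    by (rule card_UN_le) auto
  also have "\<dots> \<le> (\<Sum>U\<in>?UU. (2 ^ (k * k)) ^ r)"
    using finite_subset[of _ "{0..<n}"] by (intro sum_mono card_lists_Pow_edges_on_le) auto
  also have "\<dots> \<le> (k + 1) * n ^ k * (2 ^ (k * k)) ^ r"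
    using card_bounded_subsets[OF n, of k] by simp
  finally show ?thesis .
qed

lemma card_vtx_Un_le_4:
  assumes "E1 \<in> subgraphs3 n" "E2 \<in> subgraphs3 n" "E1 \<inter> E2 \<noteq> {}"
  shows "card (vtx E1 \<union> vtx E2) \<le> 4"
proof -
  obtain g where "g \<in> E1" "g \<in> E2"
    using assms(3) by blast
  then have "g \<subseteq> vtx E1 \<inter> vtx E2" "card g = 2"
    using subgraphs3_edge assms(1,2) by auto
  then have "2 \<le> card (vtx E1 \<inter> vtx E2)"
    using card_mono[of "vtx E1 \<inter> vtx E2" g] subgraphs3_finite_vtx[OF assms(1)] by auto
  then show ?thesis
    using card_Un_Int[OF subgraphs3_finite_vtx subgraphs3_finite_vtx, OF assms(1,2)]
      subgraphs3_card_vtx[OF assms(1)] subgraphs3_card_vtx[OF assms(2)] by linarith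
qed

text \<open>If \<open>E1\<close> shares an edge \<open>g0\<close> with \<open>E3 \<union> E4\<close> and no edge occurs exactly once, every
  vertex of \<open>E1 \<union> E2\<close> outside \<open>vtx E3 \<union> vtx E4\<close> is the vertex of \<open>E1\<close> not in \<open>g0\<close>.\<close>

lemma card_vtx_Un4_le_5_aux:
  assumes E: "E1 \<in> subgraphs3 n" "E2 \<in> subgraphs3 n" "E3 \<in> subgraphs3 n" "E4 \<in> subgraphs3 n"
    and "E3 \<inter> E4 \<noteq> {}" and g0: "g0 \<in> E1" "g0 \<in> E3 \<union> E4"
    and mult: "\<And>g. edge_count [E1, E2, E3, E4] g \<noteq> 1"
  shows "card (vtx E1 \<union> vtx E2 \<union> vtx E3 \<union> vtx E4) \<le> 5"
proof -
  let ?V = "vtx E3 \<union> vtx E4"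
  have in_V: "g \<subseteq> ?V" if "g \<in> E3 \<union> E4" for g
    using that subgraphs3_edge[OF E(3)] subgraphs3_edge[OF E(4)] by blast
  have "x \<in> ?V" if hyps: "x \<in> vtx Ei" "x \<notin> vtx Ej" "Ei \<in> {E1, E2}" "Ej \<in> {E1, E2}" for x Ei Ej
  proof -
    obtain g where g: "g \<in> Ei" "x \<in> g"
      using hyps(1) unfolding vtx_def by blast
    then have "g \<notin> Ej"
      using hyps(2) by (auto simp: vtx_def)
    then have "g \<in> E3 \<union> E4"
      using mult[of g] g(1) hyps(3,4) by (auto split: if_splits)
    then show ?thesis
      using in_V g(2) by blast
  qed
  then have sub: "vtx E1 \<union> vtx E2 \<union> vtx E3 \<union> vtx E4 \<subseteq> ?V \<union> (vtx E1 - g0)"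
    using in_V[OF g0(2)] by blast
  have "card (vtx E1 - g0) = 1"
  proof -
    have "g0 \<subseteq> vtx E1" "card g0 = 2"
      using subgraphs3_edge[OF E(1) g0(1)] by auto
    moreover have "finite g0"
      using calculation(1) subgraphs3_finite_vtx[OF E(1)] by (rule finite_subset)
    ultimately show ?thesis
      using subgraphs3_card_vtx[OF E(1)] by (simp add: card_Diff_subset)
  qed
  have "finite (?V \<union> (vtx E1 - g0))"
    using subgraphs3_finite_vtx[OF E(1)] subgraphs3_finite_vtx[OF E(3)] subgraphs3_finite_vtx[OF E(4)]
    by simp
  then have "card (vtx E1 \<union> vtx E2 \<union> vtx E3 \<union> vtx E4) \<le> card (?V \<union> (vtx E1 - g0))"
    using sub by (rule card_mono)
  also have "\<dots> \<le> card ?V + card (vtx E1 - g0)"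
    by (rule card_Un_le)
  finally show ?thesis
    using card_vtx_Un_le_4[OF E(3,4) assms(5)] \<open>card (vtx E1 - g0) = 1\<close> by simp
qed

lemma card_vtx_Un4_le_5:
  assumes E: "E1 \<in> subgraphs3 n" "E2 \<in> subgraphs3 n" "E3 \<in> subgraphs3 n" "E4 \<in> subgraphs3 n"
    and "E3 \<inter> E4 \<noteq> {}" and cross: "(E1 \<union> E2) \<inter> (E3 \<union> E4) \<noteq> {}"
    and mult: "\<And>g. edge_count [E1, E2, E3, E4] g \<noteq> 1"
  shows "card (vtx E1 \<union> vtx E2 \<union> vtx E3 \<union> vtx E4) \<le> 5"
proof -
  obtain g0 where g0: "g0 \<in> E1 \<union> E2" "g0 \<in> E3 \<union> E4"
    using cross by blast
  show ?thesis
  proof (cases "g0 \<in> E1")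
    case True
    then show ?thesis
      using card_vtx_Un4_le_5_aux[OF E assms(5) _ g0(2) mult] by blast
  next
    case False
    have "edge_count [E2, E1, E3, E4] g \<noteq> 1" for g
      using mult[of g] by (simp add: add_ac)
    then have "card (vtx E2 \<union> vtx E1 \<union> vtx E3 \<union> vtx E4) \<le> 5"
      using False g0 card_vtx_Un4_le_5_aux[OF E(2,1,3,4) assms(5)] by blast
    then show ?thesis
      by (simp add: Un_commute Un_left_commute)
  qed
qed

section \<open>Dependency neighbourhoods of the characters\<close>

definition overlapping :: "nat set set set \<Rightarrow> nat set set \<Rightarrow> nat set set set" where
  "overlapping J E = {E' \<in> J. E' \<inter> E \<noteq> {}}"

definition overlapping_pairs :: "nat set set set \<Rightarrow> (nat set set \<times> nat set set) set" where
  "overlapping_pairs J = Sigma J (overlapping J)"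

definition dependent_quadruples ::
    "nat set set set \<Rightarrow> ((nat set set \<times> nat set set) \<times> (nat set set \<times> nat set set)) set" where
  "dependent_quadruples J = {(q, q') \<in> overlapping_pairs J \<times> overlapping_pairs J.
     (fst q \<union> snd q) \<inter> (fst q' \<union> snd q') \<noteq> {}
     \<and> (\<forall>g. edge_count [fst q, snd q, fst q', snd q'] g \<noteq> 1)}"

definition local_product ::
    "real \<Rightarrow> nat set set set \<Rightarrow> (nat set set \<Rightarrow> real) \<Rightarrow> (nat set \<Rightarrow> bool) \<Rightarrow> real" where
  "local_product p J a x =
     (\<Sum>E\<in>J. a E * chi_set p E x * (\<Sum>E'\<in>overlapping J E. a E' * chi_set p E' x))"

definition chi_covariance :: "nat \<Rightarrow> real \<Rightarrow> nat set set list \<Rightarrow> nat set set list \<Rightarrow> real" where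
  "chi_covariance n p Ss Ts = measure_pmf.expectation (Gnp n p) (chi_list p (Ss @ Ts))
     - measure_pmf.expectation (Gnp n p) (chi_list p Ss) * measure_pmf.expectation (Gnp n p) (chi_list p Ts)"

lemma overlapping_subset: "overlapping J E \<subseteq> J"
  by (auto simp: overlapping_def)

lemma finite_Pow_Kedges: "J \<subseteq> Pow (Kedges n) \<Longrightarrow> finite J"
  using finite_Kedges by (meson finite_Pow_iff finite_subset)

lemma local_product_eq_sum_pairs:
  assumes "finite J"
  shows "local_product p J a x
    = (\<Sum>q\<in>overlapping_pairs J. a (fst q) * a (snd q) * chi_list p [fst q, snd q] x)"
proof -
  have "local_product p J a x
      = (\<Sum>E\<in>J. \<Sum>E'\<in>overlapping J E. a E * a E' * chi_list p [E, E'] x)"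
    by (simp add: local_product_def sum_distrib_left chi_list_def mult_ac)
  also have "\<dots> = (\<Sum>(E, E')\<in>overlapping_pairs J. a E * a E' * chi_list p [E, E'] x)"
    unfolding overlapping_pairs_def using assms finite_subset[OF overlapping_subset]
    by (intro sum.Sigma) auto
  finally show ?thesis
    by (simp add: case_prod_beta)
qed

context edge_probability
begin

text \<open>Factoring out \<open>chi p x e\<close> for an edge \<open>e\<close> of \<open>E\<close> leaves a function that does not
  depend on \<open>x e\<close>, because the summands overlapping \<open>E\<close> have been removed.\<close>

lemma expectation_mult_nonoverlapping_eq_0:
  assumes J: "J \<subseteq> Pow (Kedges n)" and E: "E \<in> J" "E \<noteq> {}"
  shows "measure_pmf.expectation (Gnp n p) (\<lambda>x. a E * chi_set p E x
    * G ((\<Sum>E'\<in>J. a E' * chi_set p E' x) - (\<Sum>E'\<in>overlapping J E. a E' * chi_set p E' x))) = 0"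
proof -
  obtain e where e: "e \<in> E"
    using E(2) by blast
  have fin: "finite J" "finite E"
    using J E(1) finite_Pow_Kedges finite_subset[OF _ finite_Kedges] by auto
  define F where "F x = a E * chi_set p (E - {e}) x
    * G (\<Sum>E'\<in>J - overlapping J E. a E' * chi_set p E' x)" for x
  have "a E * chi_set p E x * G ((\<Sum>E'\<in>J. a E' * chi_set p E' x)
      - (\<Sum>E'\<in>overlapping J E. a E' * chi_set p E' x)) = chi p x e * F x" for x
    using prod.remove[OF fin(2) e, of "chi p x"]
    by (simp add: F_def chi_set_def sum_diff[OF fin(1) overlapping_subset])
  moreover have "F (x(e := b)) = F x" for x b
  proof -
    have "chi_set p E' (x(e := b)) = chi_set p E' x" if "E' \<in> J - overlapping J E" for E'
      using that e by (intro chi_set_fun_upd) (auto simp: overlapping_def)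
    then show ?thesis
      by (simp add: F_def chi_set_fun_upd)
  qed
  moreover have "e \<in> Kedges n"
    using J E(1) e by auto
  ultimately show ?thesis
    by (simp add: expectation_chi_mult_eq_0)
qed

lemma sum_expectation_abs_mult_square_le:
  assumes J: "J \<subseteq> Pow (Kedges n)" and card: "\<And>E. E \<in> J \<Longrightarrow> card E \<le> 3"
    and a: "\<And>E. E \<in> J \<Longrightarrow> \<bar>a E\<bar> \<le> \<rho>"
  shows "(\<Sum>E\<in>J. measure_pmf.expectation (Gnp n p)
      (\<lambda>x. \<bar>a E * chi_set p E x\<bar> * (\<Sum>E'\<in>overlapping J E. a E' * chi_set p E' x)\<^sup>2))
    \<le> \<rho> ^ 3 * chi_bound p ^ 3 * (\<Sum>E\<in>J. real (card (overlapping J E)))"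
proof (unfold sum_distrib_left, rule sum_mono)
  fix E
  assume E: "E \<in> J"
  let ?V = "\<lambda>x. \<Sum>E'\<in>overlapping J E. a E' * chi_set p E' x"
  have \<rho>: "0 \<le> \<rho>"
    using a[OF E] by linarith
  have "\<bar>a E * chi_set p E x\<bar> \<le> \<rho> * chi_bound p ^ 3" for x
  proof -
    have "\<bar>chi_set p E x\<bar> \<le> chi_bound p ^ card E"
      using E J finite_subset[OF _ finite_Kedges] by (intro abs_chi_set_le) auto
    also have "\<dots> \<le> chi_bound p ^ 3"
      using card[OF E] one_le_chi_bound by (intro power_increasing) auto
    finally show ?thesis
      using a[OF E] \<rho> by (simp add: abs_mult mult_mono)
  qed
  then have "measure_pmf.expectation (Gnp n p) (\<lambda>x. \<bar>a E * chi_set p E x\<bar> * (?V x)\<^sup>2)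
      \<le> \<rho> * chi_bound p ^ 3 * measure_pmf.expectation (Gnp n p) (\<lambda>x. (?V x)\<^sup>2)"
    by (subst integral_mult_right_zero[symmetric]) (intro integral_mono integrable_Gnp mult_right_mono, auto)
  moreover have "measure_pmf.expectation (Gnp n p) (\<lambda>x. (?V x)\<^sup>2) \<le> real (card (overlapping J E)) * \<rho>\<^sup>2"
  proof -
    have "measure_pmf.expectation (Gnp n p) (\<lambda>x. (?V x)\<^sup>2) = (\<Sum>E'\<in>overlapping J E. (a E')\<^sup>2)"
      using J overlapping_subset by (intro expectation_sum_chi_set_square) blast
    also have "\<dots> \<le> (\<Sum>E'\<in>overlapping J E. \<rho>\<^sup>2)"
    proof (rule sum_mono)
      fix E'
      assume "E' \<in> overlapping J E"
      then have "\<bar>a E'\<bar> \<le> \<bar>\<rho>\<bar>"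
        using a overlapping_subset \<rho> by force
      then show "(a E')\<^sup>2 \<le> \<rho>\<^sup>2"
        by (simp add: abs_le_square_iff)
    qed
    finally show ?thesis
      by simp
  qed
  then have "\<rho> * chi_bound p ^ 3 * measure_pmf.expectation (Gnp n p) (\<lambda>x. (?V x)\<^sup>2)
      \<le> \<rho> * chi_bound p ^ 3 * (real (card (overlapping J E)) * \<rho>\<^sup>2)"
    using \<rho> one_le_chi_bound by (intro mult_left_mono) auto
  ultimately have "measure_pmf.expectation (Gnp n p) (\<lambda>x. \<bar>a E * chi_set p E x\<bar> * (?V x)\<^sup>2)
      \<le> \<rho> * chi_bound p ^ 3 * (real (card (overlapping J E)) * \<rho>\<^sup>2)"
    by linarith
  then show "measure_pmf.expectation (Gnp n p) (\<lambda>x. \<bar>a E * chi_set p E x\<bar> * (?V x)\<^sup>2)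
      \<le> \<rho> ^ 3 * chi_bound p ^ 3 * real (card (overlapping J E))"
    by (simp add: power2_eq_square power3_eq_cube mult_ac)
qed

lemma abs_expectation_chi_list_le:
  assumes "\<forall>S\<in>set Ss. finite S \<and> card S \<le> k"
  shows "\<bar>measure_pmf.expectation (Gnp n p) (chi_list p Ss)\<bar> \<le> chi_bound p ^ (k * length Ss)"
proof -
  have "\<bar>measure_pmf.expectation (Gnp n p) (chi_list p Ss)\<bar>
      \<le> measure_pmf.expectation (Gnp n p) (\<lambda>x. chi_bound p ^ (k * length Ss))"
    using abs_chi_list_le[OF assms]
    by (intro order_trans[OF integral_abs_bound] integral_mono) auto
  then show ?thesis
    by simp
qed

lemma chi_covariance_eq_0:
  assumes "\<forall>S\<in>set (Ss @ Ts). S \<subseteq> Kedges n"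
    and "\<Union>(set Ss) \<inter> \<Union>(set Ts) = {} \<or> (\<exists>g. edge_count (Ss @ Ts) g = 1)"
  shows "chi_covariance n p Ss Ts = 0"
proof (cases "\<Union>(set Ss) \<inter> \<Union>(set Ts) = {}")
  case True
  then show ?thesis
    using assms(1) by (simp add: chi_covariance_def expectation_chi_list_append)
next
  case False
  then obtain g where g: "edge_count Ss g + edge_count Ts g = 1"
    using assms(2) by auto
  have Ss: "\<forall>S\<in>set Ss. S \<subseteq> Kedges n" and Ts: "\<forall>S\<in>set Ts. S \<subseteq> Kedges n"
    using assms(1) by auto
  have "measure_pmf.expectation (Gnp n p) (chi_list p (Ss @ Ts)) = 0"
    using assms(1) g by (intro expectation_chi_list_eq_0[of _ _ g]) auto
  moreover have "edge_count Ss g = 1 \<or> edge_count Ts g = 1"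
    using g by linarith
  then have "measure_pmf.expectation (Gnp n p) (chi_list p Ss) = 0
      \<or> measure_pmf.expectation (Gnp n p) (chi_list p Ts) = 0"
    using expectation_chi_list_eq_0[OF Ss] expectation_chi_list_eq_0[OF Ts] by blast
  ultimately show ?thesis
    by (auto simp: chi_covariance_def)
qed

lemma abs_chi_covariance_le:
  assumes "\<forall>S\<in>set (Ss @ Ts). finite S \<and> card S \<le> k"
  shows "\<bar>chi_covariance n p Ss Ts\<bar> \<le> 2 * chi_bound p ^ (k * length (Ss @ Ts))"
proof -
  let ?E = "measure_pmf.expectation (Gnp n p)"
  have "\<bar>?E (chi_list p Ss)\<bar> * \<bar>?E (chi_list p Ts)\<bar>
      \<le> chi_bound p ^ (k * length Ss) * chi_bound p ^ (k * length Ts)"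
    using assms one_le_chi_bound by (intro mult_mono abs_expectation_chi_list_le) auto
  then have "\<bar>?E (chi_list p Ss) * ?E (chi_list p Ts)\<bar> \<le> chi_bound p ^ (k * length (Ss @ Ts))"
    by (simp add: abs_mult algebra_simps flip: power_add)
  moreover have "\<bar>?E (chi_list p (Ss @ Ts))\<bar> \<le> chi_bound p ^ (k * length (Ss @ Ts))"
    using assms by (rule abs_expectation_chi_list_le)
  ultimately show ?thesis
    unfolding chi_covariance_def
    using abs_triangle_ineq4[of "?E (chi_list p (Ss @ Ts))" "?E (chi_list p Ss) * ?E (chi_list p Ts)"]
    by linarith
qed

lemma expectation_local_product:
  assumes J: "J \<subseteq> Pow (Kedges n)" "{} \<notin> J"
  shows "measure_pmf.expectation (Gnp n p) (local_product p J a) = (\<Sum>E\<in>J. (a E)\<^sup>2)"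
proof -
  have "measure_pmf.expectation (Gnp n p) (local_product p J a)
      = (\<Sum>E\<in>J. \<Sum>E'\<in>overlapping J E. a E * a E'
          * measure_pmf.expectation (Gnp n p) (\<lambda>x. chi_set p E x * chi_set p E' x))"
    by (simp add: local_product_def[abs_def] sum_distrib_left Bochner_Integration.integral_sum mult_ac)
  also have "\<dots> = (\<Sum>E\<in>J. \<Sum>E'\<in>overlapping J E. if E = E' then (a E)\<^sup>2 else 0)"
  proof (intro sum.cong refl)
    fix E E'
    assume "E \<in> J" "E' \<in> overlapping J E"
    then have "E \<subseteq> Kedges n" "E' \<subseteq> Kedges n"
      using J(1) overlapping_subset by blast+
    then show "a E * a E' * measure_pmf.expectation (Gnp n p) (\<lambda>x. chi_set p E x * chi_set p E' x)
        = (if E = E' then (a E)\<^sup>2 else 0)"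
      by (simp add: expectation_chi_set_mult power2_eq_square)
  qed
  also have "\<dots> = (\<Sum>E\<in>J. (a E)\<^sup>2)"
  proof (rule sum.cong)
    fix E
    assume "E \<in> J"
    then have "E \<in> overlapping J E" "finite (overlapping J E)"
      using J finite_subset[OF overlapping_subset finite_Pow_Kedges] by (auto simp: overlapping_def)
    then show "(\<Sum>E'\<in>overlapping J E. if E = E' then (a E)\<^sup>2 else 0) = (a E)\<^sup>2"
      by simp
  qed simp
  finally show ?thesis .
qed

lemma expectation_square_one_minus_local_product:
  assumes J: "J \<subseteq> Pow (Kedges n)" "{} \<notin> J" and norm: "(\<Sum>E\<in>J. (a E)\<^sup>2) = 1"
  shows "measure_pmf.expectation (Gnp n p) (\<lambda>x. (1 - local_product p J a x)\<^sup>2)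
    = (\<Sum>((E1, E2), (E3, E4))\<in>overlapping_pairs J \<times> overlapping_pairs J.
        a E1 * a E2 * (a E3 * a E4) * chi_covariance n p [E1, E2] [E3, E4])"
proof -
  let ?P = "overlapping_pairs J"
  let ?E = "measure_pmf.expectation (Gnp n p)"
  define b where "b q = a (fst q) * a (snd q)" for q
  have "finite J"
    using J(1) by (rule finite_Pow_Kedges)
  then have T: "local_product p J a = (\<lambda>x. \<Sum>q\<in>?P. b q * chi_list p [fst q, snd q] x)"
    using local_product_eq_sum_pairs by (simp add: b_def fun_eq_iff)
  have "?E (local_product p J a) = 1"
    using expectation_local_product[OF J] norm by simp
  then have "?E (\<lambda>x. (1 - local_product p J a x)\<^sup>2)
      = ?E (\<lambda>x. (local_product p J a x)\<^sup>2) - (?E (local_product p J a))\<^sup>2"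
    by (simp add: power2_diff measure_pmf.prob_space algebra_simps)
  also have "\<dots> = (\<Sum>q\<in>?P. \<Sum>q'\<in>?P. b q * b q' * chi_covariance n p [fst q, snd q] [fst q', snd q'])"
    unfolding T by (simp add: power2_eq_square sum_product Bochner_Integration.integral_sum
        chi_list_append[symmetric] chi_covariance_def algebra_simps sum_subtractf)
  finally show ?thesis
    by (simp add: sum.cartesian_product b_def case_prod_beta')
qed

lemma chi_covariance_overlapping_pairs_eq_0:
  assumes J: "J \<subseteq> Pow (Kedges n)" and P: "(E1, E2) \<in> overlapping_pairs J" "(E3, E4) \<in> overlapping_pairs J"
    and "((E1, E2), (E3, E4)) \<notin> dependent_quadruples J"
  shows "chi_covariance n p [E1, E2] [E3, E4] = 0"
proof (rule chi_covariance_eq_0)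
  show "\<forall>S\<in>set ([E1, E2] @ [E3, E4]). S \<subseteq> Kedges n"
    using J P by (auto simp: overlapping_pairs_def overlapping_def)
  show "\<Union>(set [E1, E2]) \<inter> \<Union>(set [E3, E4]) = {} \<or> (\<exists>g. edge_count ([E1, E2] @ [E3, E4]) g = 1)"
    using P assms(4) by (auto simp: dependent_quadruples_def)
qed

lemma abs_chi_covariance_overlapping_pairs_le:
  assumes J: "J \<subseteq> Pow (Kedges n)" "\<And>E. E \<in> J \<Longrightarrow> card E \<le> 3"
    and P: "(E1, E2) \<in> overlapping_pairs J" "(E3, E4) \<in> overlapping_pairs J"
  shows "\<bar>chi_covariance n p [E1, E2] [E3, E4]\<bar> \<le> 2 * chi_bound p ^ 12"
proof -
  have "\<forall>S\<in>set ([E1, E2] @ [E3, E4]). finite S \<and> card S \<le> 3"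
    using J P finite_subset[OF _ finite_Kedges] by (auto simp: overlapping_pairs_def overlapping_def)
  then show ?thesis
    using abs_chi_covariance_le by fastforce
qed

lemma expectation_square_one_minus_local_product_le:
  assumes J: "J \<subseteq> Pow (Kedges n)" "{} \<notin> J" "\<And>E. E \<in> J \<Longrightarrow> card E \<le> 3"
    and a: "\<And>E. E \<in> J \<Longrightarrow> \<bar>a E\<bar> \<le> \<rho>" and norm: "(\<Sum>E\<in>J. (a E)\<^sup>2) = 1"
  shows "measure_pmf.expectation (Gnp n p) (\<lambda>x. (1 - local_product p J a x)\<^sup>2)
    \<le> 2 * chi_bound p ^ 12 * \<rho> ^ 4 * card (dependent_quadruples J)"
proof -
  let ?P = "overlapping_pairs J"
  let ?t = "\<lambda>((E1, E2), (E3, E4)). a E1 * a E2 * (a E3 * a E4) * chi_covariance n p [E1, E2] [E3, E4]"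
  have "finite ?P"
    using finite_Pow_Kedges[OF J(1)] finite_subset[OF overlapping_subset]
    by (auto simp: overlapping_pairs_def)
  have "(\<Sum>z\<in>?P \<times> ?P. ?t z) = (\<Sum>z\<in>dependent_quadruples J. ?t z)"
  proof (rule sum.mono_neutral_right)
    show "finite (?P \<times> ?P)"
      using \<open>finite ?P\<close> by simp
    show "dependent_quadruples J \<subseteq> ?P \<times> ?P"
      by (auto simp: dependent_quadruples_def)
    show "\<forall>z\<in>?P \<times> ?P - dependent_quadruples J. ?t z = 0"
      by (auto simp: chi_covariance_overlapping_pairs_eq_0[OF J(1)])
  qed
  also have "\<dots> \<le> (\<Sum>z\<in>dependent_quadruples J. \<rho> ^ 4 * (2 * chi_bound p ^ 12))"
  proof (rule sum_mono, clarify)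
    fix E1 E2 E3 E4
    assume "((E1, E2), (E3, E4)) \<in> dependent_quadruples J"
    then have P: "(E1, E2) \<in> ?P" "(E3, E4) \<in> ?P"
      by (auto simp: dependent_quadruples_def)
    then have "E1 \<in> J" "E2 \<in> J" "E3 \<in> J" "E4 \<in> J"
      by (auto simp: overlapping_pairs_def overlapping_def)
    then have "\<bar>a E1 * a E2 * (a E3 * a E4)\<bar> \<le> \<rho> * \<rho> * (\<rho> * \<rho>)"
      unfolding abs_mult using a order_trans[OF abs_ge_zero a] by (intro mult_mono) auto
    then have "\<bar>a E1 * a E2 * (a E3 * a E4) * chi_covariance n p [E1, E2] [E3, E4]\<bar>
        \<le> \<rho> ^ 4 * (2 * chi_bound p ^ 12)"
      unfolding abs_mult[of "a E1 * a E2 * (a E3 * a E4)"]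
      using abs_chi_covariance_overlapping_pairs_le[OF J(1,3) P]
      by (intro mult_mono) (auto simp: power4_eq_xxxx)
    then show "a E1 * a E2 * (a E3 * a E4) * chi_covariance n p [E1, E2] [E3, E4]
        \<le> \<rho> ^ 4 * (2 * chi_bound p ^ 12)"
      by (rule order_trans[OF abs_ge_self])
  qed
  finally show ?thesis
    using expectation_square_one_minus_local_product[OF J(1,2) norm] by (simp add: mult_ac)
qed

end

lemma sum_card_overlapping_subgraphs3_le:
  assumes "1 \<le> n"
  shows "(\<Sum>E\<in>subgraphs3 n. real (card (overlapping (subgraphs3 n) E))) \<le> 5 * 2 ^ 32 * real n ^ 4"
proof -
  let ?J = "subgraphs3 n"
  have "(\<Sum>E\<in>?J. card (overlapping ?J E)) = card (overlapping_pairs ?J)"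
    unfolding overlapping_pairs_def using finite_subgraphs3 finite_subset[OF overlapping_subset]
    by (intro card_SigmaI[symmetric]) auto
  also have "\<dots> = card ((\<lambda>(E, E'). [E, E']) ` overlapping_pairs ?J)"
    by (rule card_image[symmetric]) (auto simp: inj_on_def)
  also have "\<dots> \<le> (4 + 1) * n ^ 4 * (2 ^ (4 * 4)) ^ 2"
  proof (rule card_lists_subgraphs3_le[OF assms])
    fix Es
    assume "Es \<in> (\<lambda>(E, E'). [E, E']) ` overlapping_pairs ?J"
    then obtain E E' where "Es = [E, E']" "E \<in> ?J" "E' \<in> ?J" "E' \<inter> E \<noteq> {}"
      by (auto simp: overlapping_pairs_def overlapping_def)
    then show "length Es = 2 \<and> set Es \<subseteq> ?J \<and> card (\<Union>E\<in>set Es. vtx E) \<le> 4"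
      using card_vtx_Un_le_4[of E n E'] by auto
  qed
  finally have "real (\<Sum>E\<in>?J. card (overlapping ?J E)) \<le> real ((4 + 1) * n ^ 4 * (2 ^ (4 * 4)) ^ 2)"
    by linarith
  then show ?thesis
    by (simp add: power_mult[symmetric])
qed

lemma card_dependent_quadruples_subgraphs3_le:
  assumes "1 \<le> n"
  shows "real (card (dependent_quadruples (subgraphs3 n))) \<le> 6 * 2 ^ 100 * real n ^ 5"
proof -
  let ?J = "subgraphs3 n"
  let ?mk = "\<lambda>((E1, E2), (E3, E4)). [E1, E2, E3, E4 :: nat set set]"
  have "card (dependent_quadruples ?J) = card (?mk ` dependent_quadruples ?J)"
    by (rule card_image[symmetric]) (auto simp: inj_on_def)
  also have "\<dots> \<le> (5 + 1) * n ^ 5 * (2 ^ (5 * 5)) ^ 4"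
  proof (rule card_lists_subgraphs3_le[OF assms])
    fix Es
    assume "Es \<in> ?mk ` dependent_quadruples ?J"
    then obtain E1 E2 E3 E4 where Es: "Es = [E1, E2, E3, E4]"
      and mem: "((E1, E2), (E3, E4)) \<in> dependent_quadruples ?J"
      by auto
    have E: "E1 \<in> ?J" "E2 \<in> ?J" "E3 \<in> ?J" "E4 \<in> ?J" "E4 \<inter> E3 \<noteq> {}"
      and cross: "(E1 \<union> E2) \<inter> (E3 \<union> E4) \<noteq> {}" and mult: "\<And>g. edge_count [E1, E2, E3, E4] g \<noteq> 1"
      using mem by (simp_all add: dependent_quadruples_def overlapping_pairs_def overlapping_def
          del: edge_count_Cons)
    have "card (vtx E1 \<union> vtx E2 \<union> vtx E3 \<union> vtx E4) \<le> 5"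
      using E(5) by (intro card_vtx_Un4_le_5[OF E(1-4) _ cross mult]) blast
    then show "length Es = 4 \<and> set Es \<subseteq> ?J \<and> card (\<Union>E\<in>set Es. vtx E) \<le> 5"
      using Es E by (simp add: Un_assoc)
  qed
  finally have "real (card (dependent_quadruples ?J)) \<le> real ((5 + 1) * n ^ 5 * (2 ^ (5 * 5)) ^ 4)"
    by linarith
  then show ?thesis
    by (simp add: power_mult[symmetric])
qed

context edge_probability
begin

lemma wasserstein_sum_chi_set_le:
  assumes J: "J \<subseteq> Pow (Kedges n)" "{} \<notin> J" "\<And>E. E \<in> J \<Longrightarrow> card E \<le> 3"
    and a: "\<And>E. E \<in> J \<Longrightarrow> \<bar>a E\<bar> \<le> \<rho>" and norm: "(\<Sum>E\<in>J. (a E)\<^sup>2) = 1"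
    and h: "1-lipschitz_on UNIV h"
  shows "\<bar>measure_pmf.expectation (Gnp n p) (\<lambda>x. h (\<Sum>E\<in>J. a E * chi_set p E x))
      - (\<integral>z. h z \<partial>std_normal)\<bar>
    \<le> 14 * (\<rho> ^ 3 * chi_bound p ^ 3 * (\<Sum>E\<in>J. real (card (overlapping J E))))
      + 2 * (sqrt (2 * chi_bound p ^ 12 * card (dependent_quadruples J)) * \<rho>\<^sup>2)"
proof -
  let ?E = "measure_pmf.expectation (Gnp n p)"
  have "\<bar>?E (\<lambda>x. h (\<Sum>E\<in>J. a E * chi_set p E x)) - (\<integral>z. h z \<partial>std_normal)\<bar>
    \<le> 14 * (\<Sum>E\<in>J. ?E (\<lambda>x. \<bar>a E * chi_set p E x\<bar> * (\<Sum>E'\<in>overlapping J E. a E' * chi_set p E' x)\<^sup>2))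
      + 2 * ?E (\<lambda>x. \<bar>1 - local_product p J a x\<bar>)"
    unfolding local_product_def
  proof (rule wasserstein_local_dependence[OF finite_set_pmf_Gnp _ h])
    show "?E (\<lambda>x. a E * chi_set p E x * G ((\<Sum>E'\<in>J. a E' * chi_set p E' x)
        - (\<Sum>E'\<in>overlapping J E. a E' * chi_set p E' x))) = 0" if "E \<in> J" for E G
      using that J(2) by (intro expectation_mult_nonoverlapping_eq_0[OF J(1)]) auto
  qed
  moreover have "(\<Sum>E\<in>J. ?E (\<lambda>x. \<bar>a E * chi_set p E x\<bar> * (\<Sum>E'\<in>overlapping J E. a E' * chi_set p E' x)\<^sup>2))
      \<le> \<rho> ^ 3 * chi_bound p ^ 3 * (\<Sum>E\<in>J. real (card (overlapping J E)))"
    by (rule sum_expectation_abs_mult_square_le[OF J(1,3) a])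
  moreover have "?E (\<lambda>x. \<bar>1 - local_product p J a x\<bar>)
      \<le> sqrt (2 * chi_bound p ^ 12 * card (dependent_quadruples J)) * \<rho>\<^sup>2"
  proof -
    have "?E (\<lambda>x. \<bar>1 - local_product p J a x\<bar>) \<le> sqrt (?E (\<lambda>x. (1 - local_product p J a x)\<^sup>2))"
      by (rule expectation_abs_le_sqrt[OF finite_set_pmf_Gnp])
    also have "\<dots> \<le> sqrt (2 * chi_bound p ^ 12 * card (dependent_quadruples J) * (\<rho>\<^sup>2)\<^sup>2)"
      using expectation_square_one_minus_local_product_le[OF J a norm]
      by (simp add: power_mult[symmetric] mult_ac)
    also have "\<dots> = sqrt (2 * chi_bound p ^ 12 * card (dependent_quadruples J)) * \<rho>\<^sup>2"
      by (simp only: real_sqrt_mult real_sqrt_abs abs_power2)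
    finally show ?thesis .
  qed
  ultimately show ?thesis
    by linarith
qed

end

lemma local_dependence_error_le:
  fixes m \<rho> R k K :: real
  assumes m: "0 < m" and \<rho>: "0 \<le> \<rho>" "\<rho> * m ^ 3 \<le> R" and k: "0 \<le> k" "k \<le> K"
  shows "14 * (\<rho> ^ 3 * k ^ 3 * (5 * 2 ^ 32 * (m\<^sup>2) ^ 4))
      + 2 * (sqrt (2 * k ^ 12 * (6 * 2 ^ 100 * (m\<^sup>2) ^ 5)) * \<rho>\<^sup>2)
    \<le> (14 * (R ^ 3 * K ^ 3 * (5 * 2 ^ 32)) + 2 * (sqrt (12 * 2 ^ 100) * K ^ 6 * R\<^sup>2)) / m"
proof -
  let ?r = "\<rho> * m ^ 3"
  have r: "0 \<le> ?r" "?r \<le> R"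
    using \<rho> m by auto
  have "sqrt (2 * k ^ 12 * (6 * 2 ^ 100 * (m\<^sup>2) ^ 5)) = sqrt (12 * 2 ^ 100) * sqrt ((k ^ 6 * m ^ 5)\<^sup>2)"
    by (simp add: real_sqrt_mult[symmetric] power_mult_distrib power_mult[symmetric] mult_ac)
  also have "\<dots> = sqrt (12 * 2 ^ 100) * (k ^ 6 * m ^ 5)"
    using k m by simp
  finally have sqrt_eq: "sqrt (2 * k ^ 12 * (6 * 2 ^ 100 * (m\<^sup>2) ^ 5)) = sqrt (12 * 2 ^ 100) * (k ^ 6 * m ^ 5)" .
  have e1: "\<rho> ^ 3 * (m\<^sup>2) ^ 4 = ?r ^ 3 / m" and e2: "m ^ 5 * \<rho>\<^sup>2 = ?r\<^sup>2 / m"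
    using m by (simp_all add: field_simps power2_eq_square power_mult[symmetric]
        flip: power_Suc power_add)
  have "14 * (\<rho> ^ 3 * k ^ 3 * (5 * 2 ^ 32 * (m\<^sup>2) ^ 4))
      + 2 * (sqrt (2 * k ^ 12 * (6 * 2 ^ 100 * (m\<^sup>2) ^ 5)) * \<rho>\<^sup>2)
    = 14 * (k ^ 3 * (5 * 2 ^ 32) * (\<rho> ^ 3 * (m\<^sup>2) ^ 4))
      + 2 * (sqrt (12 * 2 ^ 100) * k ^ 6 * (m ^ 5 * \<rho>\<^sup>2))"
    unfolding sqrt_eq by (simp only: mult_ac)
  also have "\<dots> = (14 * (?r ^ 3 * k ^ 3 * (5 * 2 ^ 32)) + 2 * (sqrt (12 * 2 ^ 100) * k ^ 6 * ?r\<^sup>2)) / m"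
    unfolding e1 e2 by (simp add: add_divide_distrib mult_ac)
  also have "\<dots> \<le> (14 * (R ^ 3 * K ^ 3 * (5 * 2 ^ 32)) + 2 * (sqrt (12 * 2 ^ 100) * K ^ 6 * R\<^sup>2)) / m"
  proof -
    have "?r ^ 3 * k ^ 3 \<le> R ^ 3 * K ^ 3" and "k ^ 6 * ?r\<^sup>2 \<le> K ^ 6 * R\<^sup>2"
      using r k by (intro mult_mono power_mono zero_le_power; simp)+
    then show ?thesis
      using m by (intro divide_right_mono add_mono mult_left_mono mult_right_mono) (auto simp: mult.assoc)
  qed
  finally show ?thesis .
qed

context edge_probability
begin

lemma wasserstein_subgraphs3_le:
  assumes n: "1 \<le> n" and lam: "0 < lam" "lam < p" "p < 1 - lam"
    and a: "\<And>E. E \<in> subgraphs3 n \<Longrightarrow> \<bar>a E\<bar> \<le> \<rho>" and norm: "(\<Sum>E\<in>subgraphs3 n. (a E)\<^sup>2) = 1"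
    and \<rho>: "0 \<le> \<rho>" "\<rho> * sqrt n ^ 3 \<le> R" and h: "1-lipschitz_on UNIV h"
  shows "\<bar>measure_pmf.expectation (Gnp n p) (\<lambda>x. h (\<Sum>E\<in>subgraphs3 n. a E * chi_set p E x))
      - (\<integral>z. h z \<partial>std_normal)\<bar>
    \<le> (14 * (R ^ 3 * sqrt (2 / lam) ^ 3 * (5 * 2 ^ 32))
        + 2 * (sqrt (12 * 2 ^ 100) * sqrt (2 / lam) ^ 6 * R\<^sup>2)) / sqrt n"
proof -
  let ?J = "subgraphs3 n"
  have J: "?J \<subseteq> Pow (Kedges n)" "{} \<notin> ?J" "\<And>E. E \<in> ?J \<Longrightarrow> card E \<le> 3"
    using subgraphs3_subset_Kedges subgraphs3_nonempty subgraphs3_card_le by blast+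
  have "\<bar>measure_pmf.expectation (Gnp n p) (\<lambda>x. h (\<Sum>E\<in>?J. a E * chi_set p E x))
      - (\<integral>z. h z \<partial>std_normal)\<bar>
    \<le> 14 * (\<rho> ^ 3 * chi_bound p ^ 3 * (\<Sum>E\<in>?J. real (card (overlapping ?J E))))
      + 2 * (sqrt (2 * chi_bound p ^ 12 * card (dependent_quadruples ?J)) * \<rho>\<^sup>2)"
    by (rule wasserstein_sum_chi_set_le[OF J a norm h])
  also have "\<dots> \<le> 14 * (\<rho> ^ 3 * chi_bound p ^ 3 * (5 * 2 ^ 32 * ((sqrt n)\<^sup>2) ^ 4))
      + 2 * (sqrt (2 * chi_bound p ^ 12 * (6 * 2 ^ 100 * ((sqrt n)\<^sup>2) ^ 5)) * \<rho>\<^sup>2)"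
    using sum_card_overlapping_subgraphs3_le[OF n] card_dependent_quadruples_subgraphs3_le[OF n]
      \<rho>(1) one_le_chi_bound
    by (intro add_mono mult_left_mono mult_right_mono real_sqrt_le_mono) auto
  also have "\<dots> \<le> (14 * (R ^ 3 * sqrt (2 / lam) ^ 3 * (5 * 2 ^ 32))
      + 2 * (sqrt (12 * 2 ^ 100) * sqrt (2 / lam) ^ 6 * R\<^sup>2)) / sqrt n"
    using n \<rho> one_le_chi_bound chi_bound_le[OF lam] by (intro local_dependence_error_le) auto
  finally show ?thesis .
qed

end

section \<open>The three-vertex part of the statistic\<close>

definition W3_coeff :: "nat \<Rightarrow> nat set set set \<Rightarrow> (nat set set \<Rightarrow> real) \<Rightarrow> nat \<Rightarrow> nat set set \<Rightarrow> real" where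
  "W3_coeff l \<H> \<Delta> n E = (\<Sum>H\<in>{H \<in> \<H>. nv H = 3}. if graph_iso E H then real n ^ (l - 3) * \<Delta> H else 0)"

text \<open>\<open>R\<close> bounds the normalised coefficients times \<open>n powr (3 / 2)\<close>, and \<open>sqrt (2 / lam)\<close>
  bounds \<open>chi_bound p\<close>.\<close>

definition W3_constant :: "nat set set set \<Rightarrow> real \<Rightarrow> real" where
  "W3_constant \<H> lam =
     (let R = 6 * real (card {H \<in> \<H>. nv H = 3}) / lam\<^sup>2; K = sqrt (2 / lam)
      in 2 + (14 * (R ^ 3 * K ^ 3 * (5 * 2 ^ 32)) + 2 * (sqrt (12 * 2 ^ 100) * K ^ 6 * R\<^sup>2)))"

locale graph_family =
  fixes \<H> :: "nat set set set"
  assumes graphs: "\<And>H. H \<in> \<H> \<Longrightarrow> is_graph H"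
    and nonisomorphic: "\<And>G H. G \<in> \<H> \<Longrightarrow> H \<in> \<H> \<Longrightarrow> graph_iso G H \<Longrightarrow> G = H"
begin

lemma graph_iso_unique: "G \<in> \<H> \<Longrightarrow> H \<in> \<H> \<Longrightarrow> graph_iso E G \<Longrightarrow> graph_iso E H \<Longrightarrow> G = H"
  using nonisomorphic graph_iso_sym graph_iso_trans by blast

text \<open>\<open>\<H>\<close> may be infinite, but its pairwise non-isomorphic three-vertex members have
  disjoint nonempty sets of copies inside \<open>Kedges 3\<close>.\<close>

lemma finite_three_vertex_members: "finite {H \<in> \<H>. nv H = 3}"
proof -
  define copies where "copies H = {E. E \<subseteq> Kedges 3 \<and> graph_iso E H}" for H
  have copy: "copies H \<noteq> {}" if "H \<in> {H \<in> \<H>. nv H = 3}" for H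
  proof -
    have "finite (vtx H)"
      using that by (simp add: nv_def card_ge_0_finite)
    then have "\<exists>E. graph_iso E H \<and> vtx E = {0..<3} \<and> E \<subseteq> edges_on {0..<3}"
      using that by (intro exists_graph_iso_on graphs) (auto simp: nv_def)
    then obtain E where "graph_iso E H" "E \<subseteq> edges_on {0..<3}"
      by blast
    then show ?thesis
      by (auto simp: copies_def Kedges_def edges_on_def)
  qed
  have "inj_on copies {H \<in> \<H>. nv H = 3}"
  proof (rule inj_onI)
    fix H1 H2
    assume H: "H1 \<in> {H \<in> \<H>. nv H = 3}" "H2 \<in> {H \<in> \<H>. nv H = 3}" "copies H1 = copies H2"
    obtain E where "E \<in> copies H1"
      using copy[OF H(1)] by blast
    then have "graph_iso E H1" "graph_iso E H2"
      using H(3) unfolding copies_def by auto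
    then show "H1 = H2"
      using graph_iso_unique H(1,2) by blast
  qed
  moreover have "finite (copies ` {H \<in> \<H>. nv H = 3})"
    by (rule finite_subset[of _ "Pow (Pow (Kedges 3))"]) (auto simp: copies_def finite_Kedges)
  ultimately show ?thesis
    using finite_imageD by blast
qed

lemma Wk_3_eq: "Wk l \<H> \<Delta> n p 3 x = (\<Sum>E\<in>subgraphs3 n. W3_coeff l \<H> \<Delta> n E * chi_set p E x)"
proof -
  have "gammaH n p H x = (\<Sum>E\<in>subgraphs3 n. if graph_iso E H then chi_set p E x else 0)"
    if "H \<in> \<H>" "nv H = 3" for H
  proof -
    have "{E. E \<subseteq> Kedges n \<and> graph_iso E H} = {E \<in> subgraphs3 n. graph_iso E H}"
      using that graph_iso_card_vtx by (auto simp: subgraphs3_def nv_def)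
    then show ?thesis
      unfolding gammaH_def chi_set_def by (simp add: sum.inter_filter[OF finite_subgraphs3])
  qed
  then have "Wk l \<H> \<Delta> n p 3 x = (\<Sum>H\<in>{H \<in> \<H>. nv H = 3}. \<Sum>E\<in>subgraphs3 n.
      (if graph_iso E H then real n ^ (l - 3) * \<Delta> H else 0) * chi_set p E x)"
    by (auto simp: Wk_def sum_distrib_left intro!: sum.cong)
  then show ?thesis
    by (simp add: sum.swap[of _ _ "subgraphs3 n"] W3_coeff_def sum_distrib_right)
qed

lemma abs_W3_coeff_le:
  assumes "\<forall>H\<in>\<H>. \<bar>\<Delta> H\<bar> \<le> 1 / lam"
  shows "\<bar>W3_coeff l \<H> \<Delta> n E\<bar> \<le> real n ^ (l - 3) * (real (card {H \<in> \<H>. nv H = 3}) / lam)"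
proof -
  have "\<bar>W3_coeff l \<H> \<Delta> n E\<bar>
      \<le> (\<Sum>H\<in>{H \<in> \<H>. nv H = 3}. \<bar>if graph_iso E H then real n ^ (l - 3) * \<Delta> H else 0\<bar>)"
    unfolding W3_coeff_def by (rule sum_abs)
  also have "\<dots> \<le> (\<Sum>H\<in>{H \<in> \<H>. nv H = 3}. real n ^ (l - 3) * (1 / lam))"
  proof (rule sum_mono)
    fix H
    assume "H \<in> {H \<in> \<H>. nv H = 3}"
    then have \<Delta>: "\<bar>\<Delta> H\<bar> \<le> 1 / lam"
      using assms by auto
    then have "0 \<le> 1 / lam"
      by (rule order_trans[OF abs_ge_zero])
    have "real n ^ (l - 3) * \<bar>\<Delta> H\<bar> \<le> real n ^ (l - 3) * (1 / lam)"
      using \<Delta> by (rule mult_left_mono) simp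
    moreover have "0 \<le> real n ^ (l - 3) * (1 / lam)"
      using \<open>0 \<le> 1 / lam\<close> by simp
    ultimately show "\<bar>if graph_iso E H then real n ^ (l - 3) * \<Delta> H else 0\<bar> \<le> real n ^ (l - 3) * (1 / lam)"
      by (simp add: abs_mult)
  qed
  finally show ?thesis
    by (simp add: mult.commute)
qed

lemma W3_coeff_copy:
  assumes "H' \<in> \<H>" "nv H' = 3" "graph_iso E H'"
  shows "W3_coeff l \<H> \<Delta> n E = real n ^ (l - 3) * \<Delta> H'"
proof -
  have "W3_coeff l \<H> \<Delta> n E = (\<Sum>H\<in>{H \<in> \<H>. nv H = 3}. if H = H' then real n ^ (l - 3) * \<Delta> H else 0)"
    unfolding W3_coeff_def using assms graph_iso_unique by (intro sum.cong) auto
  then show ?thesis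
    using assms finite_three_vertex_members by simp
qed

lemma sum_W3_coeff_square_ge:
  assumes n: "3 \<le> n" and H': "H' \<in> \<H>" "nv H' = 3" and lam: "0 \<le> lam" "lam \<le> \<bar>\<Delta> H'\<bar>"
  shows "(real n / 3) ^ 3 * (real n ^ (l - 3) * lam)\<^sup>2 \<le> (\<Sum>E\<in>subgraphs3 n. (W3_coeff l \<H> \<Delta> n E)\<^sup>2)"
proof -
  let ?copies = "{E \<in> subgraphs3 n. graph_iso E H'}"
  have "(real n / 3) ^ 3 \<le> real (n choose 3)"
    using binomial_ge_n_over_k_pow_k[of 3 n] n by simp
  also have "\<dots> \<le> real (card ?copies)"
    using card_copies3_ge[OF graphs[OF H'(1)] H'(2)] by simp
  moreover have "lam\<^sup>2 \<le> (\<Delta> H')\<^sup>2"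
    using lam abs_le_square_iff[of lam "\<Delta> H'"] by simp
  ultimately have "(real n / 3) ^ 3 * (real n ^ (l - 3) * lam)\<^sup>2
      \<le> real (card ?copies) * (real n ^ (l - 3) * \<Delta> H')\<^sup>2"
    by (intro mult_mono) (auto simp: power_mult_distrib intro!: mult_left_mono)
  also have "\<dots> = (\<Sum>E\<in>?copies. (W3_coeff l \<H> \<Delta> n E)\<^sup>2)"
    using H' by (simp add: W3_coeff_copy)
  also have "\<dots> \<le> (\<Sum>E\<in>subgraphs3 n. (W3_coeff l \<H> \<Delta> n E)\<^sup>2)"
    by (intro sum_mono2 finite_subgraphs3) auto
  finally show ?thesis .
qed

text \<open>There are about \<open>n ^ 3\<close> copies of a three-vertex member \<open>H'\<close>, each with coefficient of
  size at least \<open>real n ^ (l - 3) * lam\<close>.\<close>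

lemma sqrt_sum_W3_coeff_square_ge:
  assumes n: "3 \<le> n" and H': "H' \<in> \<H>" "nv H' = 3" and lam: "0 \<le> lam" "lam \<le> \<bar>\<Delta> H'\<bar>"
  shows "real n ^ (l - 3) * lam * sqrt n ^ 3 / 6 \<le> sqrt (\<Sum>E\<in>subgraphs3 n. (W3_coeff l \<H> \<Delta> n E)\<^sup>2)"
proof (rule real_le_rsqrt)
  have "(sqrt n ^ 3)\<^sup>2 = real n ^ 3"
    using power_mult[of "sqrt n" 2 3] power_mult[of "sqrt n" 3 2] by simp
  then have "(real n ^ (l - 3) * lam * sqrt n ^ 3 / 6)\<^sup>2 = real n ^ 3 * (real n ^ (l - 3) * lam)\<^sup>2 / 36"
    by (simp only: power_divide power_mult_distrib) simp
  also have "\<dots> \<le> (real n / 3) ^ 3 * (real n ^ (l - 3) * lam)\<^sup>2"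
    by (simp add: field_simps)
  also have "\<dots> \<le> (\<Sum>E\<in>subgraphs3 n. (W3_coeff l \<H> \<Delta> n E)\<^sup>2)"
    using assms by (rule sum_W3_coeff_square_ge)
  finally show "(real n ^ (l - 3) * lam * sqrt n ^ 3 / 6)\<^sup>2 \<le> (\<Sum>E\<in>subgraphs3 n. (W3_coeff l \<H> \<Delta> n E)\<^sup>2)" .
qed

lemma Wk_3_div_sqrt_variance:
  assumes "0 < p" "p < 1"
  shows "Wk l \<H> \<Delta> n p 3 x / sqrt (measure_pmf.variance (Gnp n p) (Wk l \<H> \<Delta> n p 3))
    = (\<Sum>E\<in>subgraphs3 n. W3_coeff l \<H> \<Delta> n E / sqrt (\<Sum>E\<in>subgraphs3 n. (W3_coeff l \<H> \<Delta> n E)\<^sup>2)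
        * chi_set p E x)"
proof -
  interpret edge_probability p
    using assms by unfold_locales
  have W: "Wk l \<H> \<Delta> n p 3 = (\<lambda>x. \<Sum>E\<in>subgraphs3 n. W3_coeff l \<H> \<Delta> n E * chi_set p E x)"
    by (simp add: fun_eq_iff Wk_3_eq)
  have "subgraphs3 n \<subseteq> Pow (Kedges n)" "{} \<notin> subgraphs3 n"
    using subgraphs3_subset_Kedges subgraphs3_nonempty by blast+
  then have "sqrt (measure_pmf.variance (Gnp n p) (Wk l \<H> \<Delta> n p 3))
      = sqrt (\<Sum>E\<in>subgraphs3 n. (W3_coeff l \<H> \<Delta> n E)\<^sup>2)"
    unfolding W by (intro arg_cong[where f = sqrt] variance_sum_chi_set)
  then show ?thesis
    by (simp add: Wk_3_eq sum_divide_distrib)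
qed

lemma W3_stein_bound:
  assumes lam: "0 < lam" and n: "1 \<le> n" and p: "lam < p" "p < 1 - lam"
    and \<Delta>: "\<forall>H\<in>\<H>. \<bar>\<Delta> H\<bar> \<le> 1 / lam" and H': "H' \<in> \<H>" "nv H' = 3" "lam \<le> \<bar>\<Delta> H'\<bar>"
    and h: "1-lipschitz_on UNIV h"
  shows "\<bar>measure_pmf.expectation (Gnp n p)
      (\<lambda>x. h (Wk l \<H> \<Delta> n p 3 x / sqrt (measure_pmf.variance (Gnp n p) (Wk l \<H> \<Delta> n p 3))))
      - (\<integral>z. h z \<partial>std_normal)\<bar> \<le> W3_constant \<H> lam / sqrt n"
proof -
  interpret edge_probability p
    using lam p by unfold_locales auto
  let ?J = "subgraphs3 n"
  let ?N = "real (card {H \<in> \<H>. nv H = 3})"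
  define c where "c = W3_coeff l \<H> \<Delta> n"
  define \<sigma> where "\<sigma> = sqrt (\<Sum>E\<in>?J. (c E)\<^sup>2)"
  define R where "R = 6 * ?N / lam\<^sup>2"
  define err where "err = 14 * (R ^ 3 * sqrt (2 / lam) ^ 3 * (5 * 2 ^ 32))
    + 2 * (sqrt (12 * 2 ^ 100) * sqrt (2 / lam) ^ 6 * R\<^sup>2)"
  have C: "W3_constant \<H> lam = 2 + err" and "0 \<le> err"
    using lam by (simp_all add: W3_constant_def err_def R_def Let_def)
  have "\<bar>measure_pmf.expectation (Gnp n p)
      (\<lambda>x. h (Wk l \<H> \<Delta> n p 3 x / sqrt (measure_pmf.variance (Gnp n p) (Wk l \<H> \<Delta> n p 3))))
      - (\<integral>z. h z \<partial>std_normal)\<bar>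
    = \<bar>measure_pmf.expectation (Gnp n p) (\<lambda>x. h (\<Sum>E\<in>?J. c E / \<sigma> * chi_set p E x))
      - (\<integral>z. h z \<partial>std_normal)\<bar>"
    by (simp only: Wk_3_div_sqrt_variance[OF p_pos p_less_1] c_def \<sigma>_def)
  also have "\<dots> \<le> W3_constant \<H> lam / sqrt n"
  proof (cases "n < 3")
    case True
    \<comment> \<open>There are no three-vertex subgraphs, so the statistic vanishes, and so does its
      normalisation, as \<open>x / 0 = 0\<close>.\<close>
    have "sqrt n \<le> sqrt (2\<^sup>2)"
      using True by (intro real_sqrt_le_mono) simp
    then have "1 \<le> W3_constant \<H> lam / sqrt n"
      using n \<open>0 \<le> err\<close> by (simp add: le_divide_eq C)
    then show "\<bar>measure_pmf.expectation (Gnp n p) (\<lambda>x. h (\<Sum>E\<in>?J. c E / \<sigma> * chi_set p E x))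
        - (\<integral>z. h z \<partial>std_normal)\<bar> \<le> W3_constant \<H> lam / sqrt n"
      using True abs_std_normal_mean_diff_le[OF h]
      by (simp add: subgraphs3_eq_empty measure_pmf.prob_space)
  next
    case False
    have "real n ^ (l - 3) * lam * sqrt n ^ 3 / 6 \<le> \<sigma>"
      unfolding \<sigma>_def c_def using False H' lam by (intro sqrt_sum_W3_coeff_square_ge) auto
    moreover have "0 < real n ^ (l - 3) * lam * sqrt n ^ 3 / 6"
      using lam n by simp
    ultimately have \<sigma>: "0 < \<sigma>" "real n ^ (l - 3) * lam * sqrt n ^ 3 / 6 \<le> \<sigma>"
      by linarith+
    define \<rho> where "\<rho> = real n ^ (l - 3) * (?N / lam) / \<sigma>"
    have a: "\<bar>c E / \<sigma>\<bar> \<le> \<rho>" for E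
      unfolding \<rho>_def c_def abs_divide abs_of_pos[OF \<sigma>(1)]
      by (intro divide_right_mono abs_W3_coeff_le[OF \<Delta>]) (use \<sigma>(1) in simp)
    have norm: "(\<Sum>E\<in>?J. (c E / \<sigma>)\<^sup>2) = 1"
      using \<sigma>(1) by (simp add: power_divide \<sigma>_def flip: sum_divide_distrib)
    have "\<rho> * sqrt n ^ 3 = real n ^ (l - 3) * (?N / lam) * sqrt n ^ 3 / \<sigma>"
      by (simp add: \<rho>_def)
    also have "\<dots> \<le> real n ^ (l - 3) * (?N / lam) * sqrt n ^ 3 / (real n ^ (l - 3) * lam * sqrt n ^ 3 / 6)"
      using \<sigma> lam n by (intro divide_left_mono mult_pos_pos) auto
    also have "\<dots> = R"
      using lam n by (simp add: R_def power2_eq_square)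
    finally have \<rho>: "\<rho> * sqrt n ^ 3 \<le> R" .
    have "0 \<le> \<rho>"
      using lam \<sigma>(1) by (simp add: \<rho>_def)
    then have "\<bar>measure_pmf.expectation (Gnp n p) (\<lambda>x. h (\<Sum>E\<in>?J. c E / \<sigma> * chi_set p E x))
        - (\<integral>z. h z \<partial>std_normal)\<bar> \<le> err / sqrt n"
      unfolding err_def by (rule wasserstein_subgraphs3_le[OF n lam p a norm _ \<rho> h])
    also have "\<dots> \<le> W3_constant \<H> lam / sqrt n"
      unfolding C by (simp add: divide_right_mono)
    finally show "\<bar>measure_pmf.expectation (Gnp n p) (\<lambda>x. h (\<Sum>E\<in>?J. c E / \<sigma> * chi_set p E x))
        - (\<integral>z. h z \<partial>std_normal)\<bar> \<le> W3_constant \<H> lam / sqrt n" .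
  qed
  finally show ?thesis .
qed

end

lemma wass_std_normal_le:
  assumes "\<And>f. 1-lipschitz_on UNIV f \<Longrightarrow> \<bar>(\<integral>\<omega>. f (X \<omega>) \<partial>M) - (\<integral>z. f z \<partial>std_normal)\<bar> \<le> B"
  shows "wass_std_normal M X \<le> ereal B"
  unfolding wass_std_normal_def using assms by (intro SUP_least) auto

theorem lemma3p3:
  fixes l :: nat and lam :: real and \<H> \<H>' :: "nat set set set"
  assumes "l \<ge> 3" and "0 < lam" and "lam < 1/2"
    and "\<forall>H\<in>\<H>. is_graph H \<and> nv H \<le> l"
    and "\<forall>G\<in>\<H>. \<forall>H\<in>\<H>. G \<noteq> H \<longrightarrow> \<not> graph_iso G H"
    and "\<H>' \<subseteq> \<H>"
    and "\<forall>k. 3 \<le> k \<and> k \<le> l \<longrightarrow> (\<exists>H\<in>\<H>'. connected_graph H \<and> nv H = k)"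
  shows "\<exists>C. \<forall>n p \<Delta>. n \<ge> 1 \<and> lam < p \<and> p < 1 - lam
            \<and> (\<forall>H\<in>\<H>. \<bar>\<Delta> H\<bar> \<le> 1 / lam) \<and> (\<forall>H\<in>\<H>'. \<bar>\<Delta> H\<bar> \<ge> lam) \<longrightarrow>
            (let W3 = Wk l \<H> \<Delta> n p 3;
                 \<sigma> = sqrt (measure_pmf.variance (Gnp n p) W3)
             in wass_std_normal (measure_pmf (Gnp n p)) (\<lambda>x. W3 x / \<sigma>)
                  \<le> ereal (C / sqrt (real n)))"
proof -
  interpret graph_family \<H>
    using assms(4,5) by unfold_locales auto
  obtain H' where H': "H' \<in> \<H>'" "nv H' = 3"
    using assms(1,7) by fastforce
  show ?thesis
  proof (intro exI allI impI)
    fix n :: nat and p :: real and \<Delta> :: "nat set set \<Rightarrow> real"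
    assume "n \<ge> 1 \<and> lam < p \<and> p < 1 - lam \<and> (\<forall>H\<in>\<H>. \<bar>\<Delta> H\<bar> \<le> 1 / lam) \<and> (\<forall>H\<in>\<H>'. \<bar>\<Delta> H\<bar> \<ge> lam)"
    then show "let W3 = Wk l \<H> \<Delta> n p 3; \<sigma> = sqrt (measure_pmf.variance (Gnp n p) W3)
        in wass_std_normal (measure_pmf (Gnp n p)) (\<lambda>x. W3 x / \<sigma>) \<le> ereal (W3_constant \<H> lam / sqrt n)"
      unfolding Let_def using H' assms(2,6)
      by (intro wass_std_normal_le W3_stein_bound[where H' = H']) auto
  qed
qed

end
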